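(* Let $n\geq 4$, and let $\Omega_n\subset\mathbb{R}^{2n-3}$, the associated polygons, and $\Gamma_n$ be as described in the context. Define $\Theta:\mathbb{R}^5\to\mathbb{R}$ by $$\Theta(u_1,u_2,u_3,u_4,u_5)=u_1u_2(u_4^2+u_5^2-u_3^2)+u_4u_5(u_1^2+u_2^2-u_3^2),$$ and $\gamma:\Omega_n\to\mathbb{R}^{n-3}$ by $\gamma(\omega)=(\gamma_1(\omega),\dots,\gamma_{n-3}(\omega))$, where $\gamma_k(\omega)=\Theta(t_k,x_k,t_{k+1},x_{k+1},t_{k+2})$ for $\omega=(t_1,x_1,t_2,x_2,\dots,t_{n-2},x_{n-2},t_{n-1})$. Then $\Gamma_n=\gamma^{-1}(\{0\})$, and $\Gamma_n$ is a differentiable submanifold of dimension $n$ of $\mathbb{R}^{2n-3}$.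
   Context: Let $\mathcal V=\{(x,y,z)\in\mathbb{R}^3: 0<x<y+z,\ 0<y<x+z,\ 0<z<x+y\}$. For $(t,x,s)\in\mathcal V$ let $\alpha(t,x,s)\in\,]0,\pi[$ be the angle opposite the side of length $x$ in a triangle with side lengths $t,x,s$, i.e. $\alpha(t,x,s)=\arccos\frac{t^2+s^2-x^2}{2ts}$. Let $$\Omega_n=\Big\{\omega=(t_1,x_1,t_2,x_2,\dots,t_{n-2},x_{n-2},t_{n-1})\in(\mathbb{R}_{>0})^{2n-3}:\ (t_k,x_k,t_{k+1})\in\mathcal V \text{ for } k=1,\dots,n-2,\ \sum_{k=1}^{n-2}\alpha(t_k,x_k,t_{k+1})<2\pi\Big\}.$$ To $\omega\in\Omega_n$ associate the planar polygon $(M_1,\dots,M_n)$ with $M_n=O$ the origin, $M_k=t_k(\cos\theta_k,\sin\theta_k)$ for $1\le k\le n-1$, where $\theta_1=0$ and $\theta_{k+1}=\theta_k+\alpha(t_k,x_k,t_{k+1})$. Thus $t_k=M_nM_k$ and $x_k=M_kM_{k+1}$; the sides of the polygon have lengths $t_1,x_1,\dots,x_{n-2},t_{n-1}$, and $t_2,\dots,t_{n-2}$ are the lengths of the diagonals from $M_n$. The paper identifies $\Omega_n$ with the space of isometry classes of polygons star-shaped with respect to the vertex $M_n$. $\Gamma_n$ denotes the set of $\omega\in\Omega_n$ whose associated polygon is inscribable, i.e. all its vertices lie on a common circle. *)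

theory Defs
  imports "HOL-Analysis.Analysis"
begin

text \<open>C^k on an open set via iterated directional derivatives (equivalent to the
usual definition in finite dimension).\<close>
fun Ck_on :: "nat \<Rightarrow> 'a::real_normed_vector set \<Rightarrow> ('a \<Rightarrow> 'b::real_normed_vector) \<Rightarrow> bool" where
  "Ck_on 0 U f = continuous_on U f"
| "Ck_on (Suc k) U f =
     (f differentiable_on U \<and>
      (\<forall>v. Ck_on k U (\<lambda>x. frechet_derivative f (at x) v)))"

definition smooth_on :: "'a::real_normed_vector set \<Rightarrow> ('a \<Rightarrow> 'b::real_normed_vector) \<Rightarrow> bool" where
  "smooth_on U f \<longleftrightarrow> (\<forall>k. Ck_on k U f)"

definition diffeo_between :: "'a::real_normed_vector set \<Rightarrow> 'a set \<Rightarrow> ('a \<Rightarrow> 'a) \<Rightarrow> bool" where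
  "diffeo_between U V \<phi> \<longleftrightarrow>
     (\<exists>\<psi>. \<phi> ` U = V \<and> \<psi> ` V = U \<and> (\<forall>x\<in>U. \<psi> (\<phi> x) = x) \<and> (\<forall>y\<in>V. \<phi> (\<psi> y) = y)
          \<and> smooth_on U \<phi> \<and> smooth_on V \<psi>)"

definition smooth_submanifold :: "'a::euclidean_space set \<Rightarrow> nat \<Rightarrow> bool" where
  "smooth_submanifold S d \<longleftrightarrow>
     (\<forall>p\<in>S. \<exists>U V \<phi> L. open U \<and> p \<in> U \<and> open V \<and> diffeo_between U V \<phi> \<and>
        subspace L \<and> dim L = d \<and> \<phi> ` (S \<inter> U) = V \<inter> L)"

text \<open>A point omega = (t_1,x_1,...,x_{n-2},t_{n-1}) is given as a coordinate sequence
c :: nat => real with c 0 = t_1, c 1 = x_1, c 2 = t_2, ...\<close>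

definition tc :: "(nat \<Rightarrow> real) \<Rightarrow> nat \<Rightarrow> real" where
  "tc c k = c (2 * k - 2)"

definition xc :: "(nat \<Rightarrow> real) \<Rightarrow> nat \<Rightarrow> real" where
  "xc c k = c (2 * k - 1)"

definition in_V :: "real \<Rightarrow> real \<Rightarrow> real \<Rightarrow> bool" where
  "in_V x y z \<longleftrightarrow> 0 < x \<and> x < y + z \<and> 0 < y \<and> y < x + z \<and> 0 < z \<and> z < x + y"

definition alpha :: "real \<Rightarrow> real \<Rightarrow> real \<Rightarrow> real" where
  "alpha t x s = arccos ((t\<^sup>2 + s\<^sup>2 - x\<^sup>2) / (2 * t * s))"

definition in_Omega :: "nat \<Rightarrow> (nat \<Rightarrow> real) \<Rightarrow> bool" where
  "in_Omega n c \<longleftrightarrow>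
     (\<forall>i < 2 * n - 3. 0 < c i) \<and>
     (\<forall>k\<in>{1..n-2}. in_V (tc c k) (xc c k) (tc c (Suc k))) \<and>
     (\<Sum>k=1..n-2. alpha (tc c k) (xc c k) (tc c (Suc k))) < 2 * pi"

definition theta :: "(nat \<Rightarrow> real) \<Rightarrow> nat \<Rightarrow> real" where
  "theta c k = (\<Sum>j=1..<k. alpha (tc c j) (xc c j) (tc c (Suc j)))"

definition vertex :: "nat \<Rightarrow> (nat \<Rightarrow> real) \<Rightarrow> nat \<Rightarrow> complex" where
  "vertex n c k = (if k = n then 0 else complex_of_real (tc c k) * cis (theta c k))"

definition inscribable :: "nat \<Rightarrow> (nat \<Rightarrow> real) \<Rightarrow> bool" where
  "inscribable n c \<longleftrightarrow> (\<exists>z r. 0 < r \<and> (\<forall>k\<in>{1..n}. dist (vertex n c k) z = r))"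

text \<open>Identification of R^(2n-3) with real^'m via an enumeration idx of the coordinates.\<close>
definition coords :: "(nat \<Rightarrow> 'm) \<Rightarrow> real^'m \<Rightarrow> nat \<Rightarrow> real" where
  "coords idx \<omega> = (\<lambda>i. \<omega> $ idx i)"

definition Omega_set :: "(nat \<Rightarrow> 'm::finite) \<Rightarrow> nat \<Rightarrow> (real^'m) set" where
  "Omega_set idx n = {\<omega>. in_Omega n (coords idx \<omega>)}"

definition Gamma_set :: "(nat \<Rightarrow> 'm::finite) \<Rightarrow> nat \<Rightarrow> (real^'m) set" where
  "Gamma_set idx n = {\<omega> \<in> Omega_set idx n. inscribable n (coords idx \<omega>)}"

definition Theta :: "real \<Rightarrow> real \<Rightarrow> real \<Rightarrow> real \<Rightarrow> real \<Rightarrow> real" where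
  "Theta u1 u2 u3 u4 u5 = u1 * u2 * (u4\<^sup>2 + u5\<^sup>2 - u3\<^sup>2) + u4 * u5 * (u1\<^sup>2 + u2\<^sup>2 - u3\<^sup>2)"

definition gamma_k :: "(nat \<Rightarrow> real) \<Rightarrow> nat \<Rightarrow> real" where
  "gamma_k c k = Theta (tc c k) (xc c k) (tc c (k+1)) (xc c (k+1)) (tc c (k+2))"

end

(* A circle through M_n = 0 has polar equation t = a cos(theta) + b sin(theta), so the polygon
   is inscribable iff all points (theta_k, t_k) lie on one such sinusoid, iff every three
   consecutive ones do. Eliminating the angles with the law of cosines turns the three-point
   condition for k, k+1, k+2 into Theta(t_k, x_k, t_(k+1), x_(k+1), t_(k+2)) = 0.

   Theta is quadratic in its second and in its fourth argument. Around a point of Gamma_n one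
   therefore solves gamma = 0 for every side but a pivot side x_m, marching outward from the
   pivot, and subtracting these solutions straightens Gamma_n onto a coordinate subspace of
   dimension (2n-3) - (n-3) = n. The derivative needed for this vanishes only when a vertex is
   antipodal to M_n; an inscribed polygon has at most one such vertex, and the pivot is chosen
   accordingly. Smoothness is syntactic: every map involved is built from coordinates by field
   operations and square roots. *)

theory Submission
  imports Defs
begin

section \<open>Elementary smooth functions\<close>

inductive elementary_on :: "(real^'m) set \<Rightarrow> (real^'m \<Rightarrow> real) \<Rightarrow> bool" for U where
  const: "elementary_on U (\<lambda>x. c)"
| coord: "elementary_on U (\<lambda>x. x $ i)"
| add: "elementary_on U f \<Longrightarrow> elementary_on U g \<Longrightarrow> elementary_on U (\<lambda>x. f x + g x)"
| mult: "elementary_on U f \<Longrightarrow> elementary_on U g \<Longrightarrow> elementary_on U (\<lambda>x. f x * g x)"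
| inverse:
    "elementary_on U f \<Longrightarrow> (\<forall>x\<in>U. f x \<noteq> 0) \<Longrightarrow> elementary_on U (\<lambda>x. inverse (f x))"
| sqrt: "elementary_on U f \<Longrightarrow> (\<forall>x\<in>U. f x > 0) \<Longrightarrow> elementary_on U (\<lambda>x. sqrt (f x))"
| cong: "elementary_on U f \<Longrightarrow> (\<forall>x\<in>U. f x = g x) \<Longrightarrow> elementary_on U g"

lemma elementary_on_diff:
  assumes "elementary_on U f" "elementary_on U g"
  shows "elementary_on U (\<lambda>x. f x - g x)"
proof -
  have "elementary_on U (\<lambda>x. f x + (-1) * g x)"
    by (intro elementary_on.add elementary_on.mult elementary_on.const assms)
  then show ?thesis by (rule elementary_on.cong) auto
qed

lemma elementary_on_power2:
  assumes "elementary_on U f"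
  shows "elementary_on U (\<lambda>x. (f x)\<^sup>2)"
  using elementary_on.mult[OF assms assms] by (rule elementary_on.cong) (simp add: power2_eq_square)

definition elementary_differentiable_on :: "(real^'m) set \<Rightarrow> (real^'m \<Rightarrow> real) \<Rightarrow> bool" where
  "elementary_differentiable_on U f \<longleftrightarrow>
     (\<exists>f'. (\<forall>x\<in>U. (f has_derivative f' x) (at x)) \<and> (\<forall>v. elementary_on U (\<lambda>x. f' x v)))"

lemma elementary_differentiable_on_const: "elementary_differentiable_on U (\<lambda>x. c)"
  unfolding elementary_differentiable_on_def
  by (intro exI[of _ "\<lambda>x v. 0"]) (auto intro: elementary_on.const)

lemma elementary_differentiable_on_coord: "elementary_differentiable_on U (\<lambda>x. x $ i)"
  unfolding elementary_differentiable_on_def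
  by (intro exI[of _ "\<lambda>x v. v $ i"])
    (auto intro: elementary_on.const bounded_linear.has_derivative[OF bounded_linear_vec_nth] has_derivative_ident)

lemma elementary_differentiable_on_add:
  assumes "elementary_differentiable_on U f" "elementary_differentiable_on U g"
  shows "elementary_differentiable_on U (\<lambda>x. f x + g x)"
proof -
  obtain f' g' where f: "\<forall>x\<in>U. (f has_derivative f' x) (at x)" "\<forall>v. elementary_on U (\<lambda>x. f' x v)"
    and g: "\<forall>x\<in>U. (g has_derivative g' x) (at x)" "\<forall>v. elementary_on U (\<lambda>x. g' x v)"
    using assms unfolding elementary_differentiable_on_def by blast
  have "((\<lambda>x. f x + g x) has_derivative (\<lambda>v. f' x v + g' x v)) (at x)" if "x \<in> U" for x
    using f g that by (intro has_derivative_add) auto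
  moreover have "elementary_on U (\<lambda>x. f' x v + g' x v)" for v
    using f g by (intro elementary_on.add) auto
  ultimately show ?thesis
    unfolding elementary_differentiable_on_def by (intro exI[of _ "\<lambda>x v. f' x v + g' x v"]) blast
qed

lemma elementary_differentiable_on_mult:
  assumes "elementary_on U f" "elementary_on U g"
    and "elementary_differentiable_on U f" "elementary_differentiable_on U g"
  shows "elementary_differentiable_on U (\<lambda>x. f x * g x)"
proof -
  obtain f' g' where f: "\<forall>x\<in>U. (f has_derivative f' x) (at x)" "\<forall>v. elementary_on U (\<lambda>x. f' x v)"
    and g: "\<forall>x\<in>U. (g has_derivative g' x) (at x)" "\<forall>v. elementary_on U (\<lambda>x. g' x v)"
    using assms(3,4) unfolding elementary_differentiable_on_def by blast
  have "((\<lambda>x. f x * g x) has_derivative (\<lambda>v. f x * g' x v + f' x v * g x)) (at x)" if "x \<in> U" for x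
    using f g that by (intro has_derivative_mult) auto
  moreover have "elementary_on U (\<lambda>x. f x * g' x v + f' x v * g x)" for v
    using f g assms(1,2) by (intro elementary_on.add[OF elementary_on.mult elementary_on.mult]) auto
  ultimately show ?thesis
    unfolding elementary_differentiable_on_def by (intro exI[of _ "\<lambda>x v. f x * g' x v + f' x v * g x"]) blast
qed

lemma elementary_differentiable_on_inverse:
  assumes "elementary_on U f" "\<forall>x\<in>U. f x \<noteq> 0" "elementary_differentiable_on U f"
  shows "elementary_differentiable_on U (\<lambda>x. inverse (f x))"
proof -
  obtain f' where f: "\<forall>x\<in>U. (f has_derivative f' x) (at x)" "\<forall>v. elementary_on U (\<lambda>x. f' x v)"
    using assms(3) unfolding elementary_differentiable_on_def by blast
  have "((\<lambda>x. inverse (f x)) has_derivative (\<lambda>v. (-1) * (inverse (f x) * f' x v * inverse (f x)))) (at x)"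
    if "x \<in> U" for x
  proof -
    have "((\<lambda>x. inverse (f x)) has_derivative (\<lambda>v. - (inverse (f x) * f' x v * inverse (f x)))) (at x)"
      using f assms(2) that by (intro Deriv.has_derivative_inverse) auto
    then show ?thesis by simp
  qed
  moreover have "elementary_on U (\<lambda>x. (-1) * (inverse (f x) * f' x v * inverse (f x)))" for v
    using f assms(1,2) by (intro elementary_on.mult elementary_on.const elementary_on.inverse) auto
  ultimately show ?thesis
    unfolding elementary_differentiable_on_def
    by (intro exI[of _ "\<lambda>x v. (-1) * (inverse (f x) * f' x v * inverse (f x))"]) blast
qed

lemma elementary_differentiable_on_sqrt:
  assumes "elementary_on U f" "\<forall>x\<in>U. f x > 0" "elementary_differentiable_on U f"
  shows "elementary_differentiable_on U (\<lambda>x. sqrt (f x))"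
proof -
  obtain f' where f: "\<forall>x\<in>U. (f has_derivative f' x) (at x)" "\<forall>v. elementary_on U (\<lambda>x. f' x v)"
    using assms(3) unfolding elementary_differentiable_on_def by blast
  have "((\<lambda>x. sqrt (f x)) has_derivative (\<lambda>v. f' x v * inverse (sqrt (f x) * 2))) (at x)" if "x \<in> U" for x
  proof -
    have "((\<lambda>x. sqrt (f x)) has_derivative (\<lambda>v. f' x v * (inverse (sqrt (f x)) / 2))) (at x)"
      using f assms(2) that by (intro has_derivative_real_sqrt) auto
    then show ?thesis by (simp add: field_simps)
  qed
  moreover have "elementary_on U (\<lambda>x. inverse (sqrt (f x) * 2))"
    using assms(1,2)
    by (intro elementary_on.inverse elementary_on.mult elementary_on.sqrt elementary_on.const) auto
  then have "elementary_on U (\<lambda>x. f' x v * inverse (sqrt (f x) * 2))" for v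
    using f by (intro elementary_on.mult) auto
  ultimately show ?thesis
    unfolding elementary_differentiable_on_def by (intro exI[of _ "\<lambda>x v. f' x v * inverse (sqrt (f x) * 2)"]) blast
qed

lemma elementary_differentiable_on_cong:
  assumes "open U" "\<forall>x\<in>U. f x = g x" "elementary_differentiable_on U f"
  shows "elementary_differentiable_on U g"
  using assms unfolding elementary_differentiable_on_def
  by (auto intro: has_derivative_transform_within_open)

lemma elementary_differentiable_on_if_elementary_on:
  assumes "elementary_on U f" "open U"
  shows "elementary_differentiable_on U f"
  using assms(1)
  by (induction rule: elementary_on.induct)
    (blast intro: elementary_differentiable_on_const elementary_differentiable_on_coord
      elementary_differentiable_on_add elementary_differentiable_on_mult elementary_differentiable_on_inverse
      elementary_differentiable_on_sqrt elementary_differentiable_on_cong[OF assms(2)])+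

lemma has_derivative_vec_componentwise:
  fixes F :: "real^'m \<Rightarrow> real^'n"
  assumes "\<And>j. ((\<lambda>x. F x $ j) has_derivative (\<lambda>v. G v $ j)) (at x)"
  shows "(F has_derivative G) (at x)"
proof (subst has_derivative_componentwise_within, intro ballI)
  fix i :: "real^'n" assume "i \<in> Basis"
  then obtain j where "i = axis j 1" by (auto simp: Basis_vec_def)
  then show "((\<lambda>x. F x \<bullet> i) has_derivative (\<lambda>v. G v \<bullet> i)) (at x)"
    using assms[of j] by (simp add: cart_eq_inner_axis[symmetric])
qed

lemma Ck_on_elementary_components:
  fixes F :: "real^'m \<Rightarrow> real^'n"
  assumes "open U" "\<And>j. elementary_on U (\<lambda>x. F x $ j)"
  shows "Ck_on k U F"
  using assms(2)
proof (induction k arbitrary: F)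
  case 0
  obtain F' where F': "\<And>j x. x \<in> U \<Longrightarrow> ((\<lambda>x. F x $ j) has_derivative F' j x) (at x)"
    using elementary_differentiable_on_if_elementary_on[OF 0 assms(1)]
    unfolding elementary_differentiable_on_def by metis
  have "(F has_derivative (\<lambda>v. \<chi> j. F' j x v)) (at x)" if "x \<in> U" for x
    by (rule has_derivative_vec_componentwise) (simp add: F' that)
  then show ?case
    by (auto intro!: has_derivative_continuous continuous_at_imp_continuous_on)
next
  case (Suc k)
  obtain F' where F': "\<And>j x. x \<in> U \<Longrightarrow> ((\<lambda>x. F x $ j) has_derivative F' j x) (at x)"
    and elem: "\<And>j v. elementary_on U (\<lambda>x. F' j x v)"
    using elementary_differentiable_on_if_elementary_on[OF Suc.prems assms(1)]
    unfolding elementary_differentiable_on_def by metis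
  have D: "(F has_derivative (\<lambda>v. \<chi> j. F' j x v)) (at x)" if "x \<in> U" for x
    by (rule has_derivative_vec_componentwise) (simp add: F' that)
  then have "F differentiable_on U"
    by (meson differentiable_at_withinI differentiable_def differentiable_on_def)
  moreover have "Ck_on k U (\<lambda>x. frechet_derivative F (at x) v)" for v
  proof (rule Suc.IH)
    show "elementary_on U (\<lambda>x. frechet_derivative F (at x) v $ j)" for j
      by (rule elementary_on.cong[OF elem[of j v]]) (simp add: frechet_derivative_at[OF D, symmetric])
  qed
  ultimately show ?case by simp
qed

lemma smooth_on_elementary_components:
  fixes F :: "real^'m \<Rightarrow> real^'n"
  assumes "open U" "\<And>j. elementary_on U (\<lambda>x. F x $ j)"
  shows "smooth_on U F"
  using Ck_on_elementary_components[OF assms] by (simp add: smooth_on_def)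

definition quadratic_root :: "real \<Rightarrow> real \<Rightarrow> real \<Rightarrow> real \<Rightarrow> real" where
  "quadratic_root a b c s = (- b + s * sqrt (b\<^sup>2 - 4 * a * c)) / (2 * a)"

text \<open>The sign \<open>s = \<plusminus>1\<close> selects the root at which the derivative \<open>2 a y + b\<close> of the
  quadratic has sign \<open>s\<close>.\<close>

lemma quadratic_eq_0_iff_root:
  fixes a b c s y :: real
  assumes a: "a > 0" and s: "s = 1 \<or> s = -1" and sy: "s * (2 * a * y + b) > 0"
  shows "a * y\<^sup>2 + b * y + c = 0 \<longleftrightarrow> y = quadratic_root a b c s"
proof -
  define D where "D = b\<^sup>2 - 4 * a * c"
  have ss: "s * s = 1" using s by auto
  have "4 * a * (a * y\<^sup>2 + b * y + c) = (2 * a * y + b)\<^sup>2 - D"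
    by (simp add: D_def power2_eq_square algebra_simps)
  then have "a * y\<^sup>2 + b * y + c = 0 \<longleftrightarrow> (2 * a * y + b)\<^sup>2 = D"
    using a by (metis eq_iff_diff_eq_0 mult_eq_0_iff zero_neq_numeral less_irrefl)
  also have "\<dots> \<longleftrightarrow> s * (2 * a * y + b) = sqrt D"
  proof
    assume "(2 * a * y + b)\<^sup>2 = D"
    then have "\<bar>2 * a * y + b\<bar> = sqrt D" by (metis real_sqrt_abs)
    moreover have "\<bar>2 * a * y + b\<bar> = s * (2 * a * y + b)" using s sy by auto
    ultimately show "s * (2 * a * y + b) = sqrt D" by simp
  next
    assume "s * (2 * a * y + b) = sqrt D"
    then have "(s * (2 * a * y + b))\<^sup>2 = D"
      using sy by (metis real_sqrt_pow2 real_sqrt_le_0_iff not_less less_imp_le)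
    moreover have "(s * (2 * a * y + b))\<^sup>2 = (s * s) * (2 * a * y + b)\<^sup>2"
      by (simp add: power2_eq_square)
    ultimately show "(2 * a * y + b)\<^sup>2 = D" using ss by simp
  qed
  also have "\<dots> \<longleftrightarrow> 2 * a * y + b = s * sqrt D"
    using ss by (metis mult.assoc mult_1)
  also have "\<dots> \<longleftrightarrow> y = quadratic_root a b c s"
    unfolding quadratic_root_def D_def[symmetric] using a by (auto simp: field_simps)
  finally show ?thesis .
qed

lemma elementary_on_quadratic_root:
  assumes a: "elementary_on U a" and b: "elementary_on U b" and c: "elementary_on U c"
    and "\<forall>x\<in>U. a x > 0" "\<forall>x\<in>U. (b x)\<^sup>2 - 4 * a x * c x > 0"
  shows "elementary_on U (\<lambda>x. quadratic_root (a x) (b x) (c x) s)"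
proof (rule elementary_on.cong)
  have "elementary_on U (\<lambda>x. (b x)\<^sup>2 - 4 * a x * c x)"
    by (rule elementary_on_diff[OF elementary_on_power2[OF b]
          elementary_on.mult[OF elementary_on.mult[OF elementary_on.const a] c]])
  then have "elementary_on U (\<lambda>x. sqrt ((b x)\<^sup>2 - 4 * a x * c x))"
    using assms(5) by (rule elementary_on.sqrt)
  then have "elementary_on U (\<lambda>x. (-1) * b x + s * sqrt ((b x)\<^sup>2 - 4 * a x * c x))"
    by (rule elementary_on.add[OF elementary_on.mult[OF elementary_on.const b] elementary_on.mult[OF elementary_on.const]])
  moreover have "elementary_on U (\<lambda>x. inverse (2 * a x))"
    by (rule elementary_on.inverse[OF elementary_on.mult[OF elementary_on.const a]]) (use assms(4) in auto)
  ultimately show "elementary_on U (\<lambda>x. ((-1) * b x + s * sqrt ((b x)\<^sup>2 - 4 * a x * c x)) * inverse (2 * a x))"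
    by (rule elementary_on.mult)
  show "\<forall>x\<in>U. ((-1) * b x + s * sqrt ((b x)\<^sup>2 - 4 * a x * c x)) * inverse (2 * a x)
      = quadratic_root (a x) (b x) (c x) s"
    by (simp only: quadratic_root_def divide_inverse mult_minus1) blast
qed

lemma isCont_quadratic_root:
  assumes "isCont a x" "isCont b x" "isCont c x" "a x \<noteq> 0"
  shows "isCont (\<lambda>x. quadratic_root (a x) (b x) (c x) s) x"
  unfolding quadratic_root_def using assms
  by (intro isCont_divide isCont_add isCont_mult isCont_minus isCont_diff isCont_power continuous_const
      isCont_o2[OF _ isCont_real_sqrt]) auto

section \<open>Triangles and the function \<open>Theta\<close>\<close>

lemma in_V_cos_bounds:
  assumes "in_V t x s"
  shows "-1 < (t\<^sup>2 + s\<^sup>2 - x\<^sup>2) / (2 * t * s)" "(t\<^sup>2 + s\<^sup>2 - x\<^sup>2) / (2 * t * s) < 1"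
proof -
  from assms have t: "t > 0" and s: "s > 0" and x: "x > 0" and "x < t + s" "t < x + s" "s < t + x"
    by (auto simp: in_V_def)
  have ts: "2 * t * s > 0" using t s by simp
  have "\<bar>t - s\<bar> < x" using \<open>t < x + s\<close> \<open>s < t + x\<close> by linarith
  then have "\<bar>t - s\<bar>\<^sup>2 < x\<^sup>2" using x by (intro power_strict_mono) auto
  then have "t\<^sup>2 + s\<^sup>2 - x\<^sup>2 < 2 * t * s" by (simp add: power2_eq_square algebra_simps)
  then show "(t\<^sup>2 + s\<^sup>2 - x\<^sup>2) / (2 * t * s) < 1" using ts by simp
  have "x\<^sup>2 < (t + s)\<^sup>2" using x \<open>x < t + s\<close> by (intro power_strict_mono) auto
  then have "-(2 * t * s) < t\<^sup>2 + s\<^sup>2 - x\<^sup>2" by (simp add: power2_eq_square algebra_simps)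
  then show "-1 < (t\<^sup>2 + s\<^sup>2 - x\<^sup>2) / (2 * t * s)" using ts by (simp add: field_simps)
qed

lemma cos_alpha:
  assumes "in_V t x s"
  shows "cos (alpha t x s) = (t\<^sup>2 + s\<^sup>2 - x\<^sup>2) / (2 * t * s)"
  using in_V_cos_bounds[OF assms] by (simp add: alpha_def)

lemma alpha_bounds:
  assumes "in_V t x s"
  shows "0 < alpha t x s" "alpha t x s < pi"
  using in_V_cos_bounds[OF assms] arccos_lt_bounded by (auto simp: alpha_def)

lemma sin_alpha_gt_0: "in_V t x s \<Longrightarrow> sin (alpha t x s) > 0"
  using alpha_bounds by (simp add: sin_gt_zero)

lemma sin_alpha_square:
  assumes "in_V t x s"
  shows "(2 * t * s * sin (alpha t x s))\<^sup>2 = 4 * t\<^sup>2 * s\<^sup>2 - (t\<^sup>2 + s\<^sup>2 - x\<^sup>2)\<^sup>2"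
proof -
  have "t > 0" "s > 0" using assms by (auto simp: in_V_def)
  have "(2 * t * s * sin (alpha t x s))\<^sup>2 = (2 * t * s)\<^sup>2 - (2 * t * s * cos (alpha t x s))\<^sup>2"
    by (simp add: power_mult_distrib sin_squared_eq algebra_simps)
  also have "2 * t * s * cos (alpha t x s) = t\<^sup>2 + s\<^sup>2 - x\<^sup>2"
    using cos_alpha[OF assms] \<open>t > 0\<close> \<open>s > 0\<close> by simp
  finally show ?thesis by (simp add: power_mult_distrib)
qed

lemma sinusoid_three_point:
  fixes a b u v w :: real
  shows "(a * cos u + b * sin u) * sin (w - v) - (a * cos v + b * sin v) * sin (w - u)
       + (a * cos w + b * sin w) * sin (v - u) = 0"
  by (simp add: sin_diff algebra_simps)

lemma weighted_sum_eq_0_iff: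
  fixes s1 s2 P Q u1 u2 u4 u5 :: real
  assumes "s1 > 0" "s2 > 0" "u1 > 0" "u2 > 0" "u4 > 0" "u5 > 0"
    and s1: "s1\<^sup>2 = 4 * u1\<^sup>2 * u2\<^sup>2 - P\<^sup>2" and s2: "s2\<^sup>2 = 4 * u4\<^sup>2 * u5\<^sup>2 - Q\<^sup>2"
  shows "s2 * P + s1 * Q = 0 \<longleftrightarrow> u4 * u5 * P + u1 * u2 * Q = 0"
proof
  assume "s2 * P + s1 * Q = 0"
  then have e: "s2 * P = - (s1 * Q)" by (simp add: eq_neg_iff_add_eq_0)
  have "s2 * (P * Q) = - (s1 * Q\<^sup>2)"
    using arg_cong[OF e, of "\<lambda>z. z * Q"] by (simp add: power2_eq_square mult.assoc)
  moreover have "s1 * Q\<^sup>2 \<ge> 0" using assms(1) by simp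
  ultimately have "s2 * (P * Q) \<le> 0" by linarith
  then have "P * Q \<le> 0" using assms(2) by (simp add: mult_le_0_iff)
  have "(s2 * P)\<^sup>2 = (s1 * Q)\<^sup>2" using e by simp
  then have "(u4 * u5 * P - u1 * u2 * Q) * (u4 * u5 * P + u1 * u2 * Q) = 0"
    using s1 s2 by algebra
  moreover have "P = 0 \<and> Q = 0" if same: "u4 * u5 * P = u1 * u2 * Q"
  proof -
    have "u4 * u5 * (P * Q) = u1 * u2 * Q\<^sup>2" using same by algebra
    moreover have "u4 * u5 * (P * Q) \<le> 0"
      using \<open>P * Q \<le> 0\<close> assms(5,6) by (simp add: mult_nonneg_nonpos)
    ultimately have "u1 * u2 * Q\<^sup>2 \<le> 0" by simp
    then have "Q = 0" using assms(3,4) by (simp add: mult_le_0_iff)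
    then show ?thesis using same assms(5,6) by simp
  qed
  ultimately show "u4 * u5 * P + u1 * u2 * Q = 0" by auto
next
  assume h: "u4 * u5 * P + u1 * u2 * Q = 0"
  define K where "K = u1 * u2 / (u4 * u5)"
  have K: "K > 0" using assms by (simp add: K_def)
  have KK: "u1 * u2 = K * (u4 * u5)" using assms by (simp add: K_def)
  then have "u4 * u5 * P = u4 * u5 * (- K * Q)" using h by algebra
  then have PK: "P = - K * Q" using assms(5,6) by (metis mult_cancel_left mult_pos_pos less_irrefl)
  have "s1\<^sup>2 = (K * s2)\<^sup>2" using s1 s2 PK KK by algebra
  then have "s1 = K * s2" using K assms by (simp add: power2_eq_iff_nonneg)
  then show "s2 * P + s1 * Q = 0" using PK by (simp add: algebra_simps)
qed

lemma sine_relation_eq_0_iff_Theta_eq_0: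
  assumes V1: "in_V u1 u2 u3" and V2: "in_V u3 u4 u5"
  shows "u1 * sin (alpha u3 u4 u5) - u3 * sin (alpha u1 u2 u3 + alpha u3 u4 u5) + u5 * sin (alpha u1 u2 u3) = 0
         \<longleftrightarrow> Theta u1 u2 u3 u4 u5 = 0"
proof -
  define a where "a = alpha u1 u2 u3"
  define b where "b = alpha u3 u4 u5"
  have p: "u1 > 0" "u2 > 0" "u3 > 0" "u4 > 0" "u5 > 0" using V1 V2 by (auto simp: in_V_def)
  define s1 where "s1 = 2 * u1 * u3 * sin a"
  define s2 where "s2 = 2 * u3 * u5 * sin b"
  define P where "P = u1\<^sup>2 + u2\<^sup>2 - u3\<^sup>2"
  define Q where "Q = u4\<^sup>2 + u5\<^sup>2 - u3\<^sup>2"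
  have s1sq: "s1\<^sup>2 = 4 * u1\<^sup>2 * u2\<^sup>2 - P\<^sup>2"
    using sin_alpha_square[OF V1] unfolding s1_def P_def a_def by (simp add: power2_eq_square algebra_simps)
  have s2sq: "s2\<^sup>2 = 4 * u4\<^sup>2 * u5\<^sup>2 - Q\<^sup>2"
    using sin_alpha_square[OF V2] unfolding s2_def Q_def b_def by (simp add: power2_eq_square algebra_simps)
  have ca: "2 * u1 * u3 * cos a = u1\<^sup>2 + u3\<^sup>2 - u2\<^sup>2" using cos_alpha[OF V1] p by (simp add: a_def field_simps)
  have cb: "2 * u3 * u5 * cos b = u3\<^sup>2 + u5\<^sup>2 - u4\<^sup>2" using cos_alpha[OF V2] p by (simp add: b_def field_simps)
  have "4 * u1 * u3 * u5 * (u1 * sin b - u3 * sin (a + b) + u5 * sin a)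
      = 2 * u1\<^sup>2 * s2 - s1 * (2 * u3 * u5 * cos b) - s2 * (2 * u1 * u3 * cos a) + 2 * u5\<^sup>2 * s1"
    unfolding s1_def s2_def by (simp add: sin_add power2_eq_square algebra_simps)
  also have "\<dots> = s2 * P + s1 * Q" unfolding ca cb P_def Q_def by (simp add: algebra_simps)
  finally have "u1 * sin b - u3 * sin (a + b) + u5 * sin a = 0 \<longleftrightarrow> s2 * P + s1 * Q = 0"
    using p by (metis mult_eq_0_iff not_less_iff_gr_or_eq zero_less_numeral mult_pos_pos)
  also have "\<dots> \<longleftrightarrow> u4 * u5 * P + u1 * u2 * Q = 0"
    using sin_alpha_gt_0[OF V1] sin_alpha_gt_0[OF V2] p
    by (intro weighted_sum_eq_0_iff s1sq s2sq) (simp_all add: s1_def s2_def a_def b_def)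
  also have "\<dots> \<longleftrightarrow> Theta u1 u2 u3 u4 u5 = 0"
    unfolding Theta_def P_def Q_def by (simp add: algebra_simps)
  finally show ?thesis unfolding a_def b_def .
qed

text \<open>On the zero set of \<open>Theta\<close>, the partial derivatives in \<open>u4\<close> and \<open>u2\<close> vanish only at the
  right angles \<open>u5\<^sup>2 = u3\<^sup>2 + u4\<^sup>2\<close> and \<open>u1\<^sup>2 = u2\<^sup>2 + u3\<^sup>2\<close>.\<close>

lemma Theta_eq_0_partial_u4:
  fixes u1 u2 u3 u4 u5 :: real
  assumes "Theta u1 u2 u3 u4 u5 = 0"
  shows "u4 * (2 * (u1 * u2) * u4 + u5 * (u1\<^sup>2 + u2\<^sup>2 - u3\<^sup>2)) = u1 * u2 * (u4\<^sup>2 + u3\<^sup>2 - u5\<^sup>2)"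
  using assms unfolding Theta_def by algebra

lemma Theta_eq_0_partial_u2:
  fixes u1 u2 u3 u4 u5 :: real
  assumes "Theta u1 u2 u3 u4 u5 = 0"
  shows "u2 * (2 * (u4 * u5) * u2 + u1 * (u4\<^sup>2 + u5\<^sup>2 - u3\<^sup>2)) = u4 * u5 * (u2\<^sup>2 - u1\<^sup>2 + u3\<^sup>2)"
  using assms unfolding Theta_def by algebra

section \<open>Inscribable polygons\<close>

definition central_angle :: "(nat \<Rightarrow> real) \<Rightarrow> nat \<Rightarrow> real" where
  "central_angle c k = alpha (tc c k) (xc c k) (tc c (Suc k))"

definition sine_relation :: "(nat \<Rightarrow> real) \<Rightarrow> nat \<Rightarrow> real" where
  "sine_relation c k = tc c k * sin (central_angle c (Suc k))
     - tc c (Suc k) * sin (central_angle c k + central_angle c (Suc k))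
     + tc c (Suc (Suc k)) * sin (central_angle c k)"

lemma theta_Suc: "1 \<le> k \<Longrightarrow> theta c (Suc k) = theta c k + central_angle c k"
  by (simp add: theta_def central_angle_def)

lemma in_Omega_tc_pos: "in_Omega n c \<Longrightarrow> 1 \<le> k \<Longrightarrow> k \<le> n - 1 \<Longrightarrow> 0 < tc c k"
  unfolding in_Omega_def tc_def by auto

lemma in_Omega_in_V: "in_Omega n c \<Longrightarrow> 1 \<le> k \<Longrightarrow> k \<le> n - 2 \<Longrightarrow> in_V (tc c k) (xc c k) (tc c (Suc k))"
  unfolding in_Omega_def by auto

lemma vertex_polar: "1 \<le> k \<Longrightarrow> k \<le> n - 1 \<Longrightarrow> vertex n c k = complex_of_real (tc c k) * cis (theta c k)"
  by (simp add: vertex_def)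

lemma dist_eq_cmod_iff:
  fixes u z :: complex
  shows "dist u z = cmod z \<longleftrightarrow> (Re u)\<^sup>2 + (Im u)\<^sup>2 = 2 * (Re u * Re z + Im u * Im z)"
proof -
  have "dist u z = cmod z \<longleftrightarrow> (dist u z)\<^sup>2 = (cmod z)\<^sup>2"
    by (simp add: power2_eq_iff_nonneg)
  also have "\<dots> \<longleftrightarrow> (Re u - Re z)\<^sup>2 + (Im u - Im z)\<^sup>2 = (Re z)\<^sup>2 + (Im z)\<^sup>2"
    by (simp add: dist_norm cmod_power2)
  also have "\<dots> \<longleftrightarrow> (Re u)\<^sup>2 + (Im u)\<^sup>2 = 2 * (Re u * Re z + Im u * Im z)"
    by (simp add: power2_eq_square algebra_simps)
  finally show ?thesis .
qed

lemma dist_polar_eq_cmod_iff: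
  assumes "0 < r"
  shows "dist (complex_of_real r * cis \<theta>) z = cmod z \<longleftrightarrow> r = 2 * Re z * cos \<theta> + 2 * Im z * sin \<theta>"
proof -
  have "(r * cos \<theta>)\<^sup>2 + (r * sin \<theta>)\<^sup>2 = r * r"
    by (simp add: power_mult_distrib flip: distrib_left power2_eq_square)
  then have "dist (complex_of_real r * cis \<theta>) z = cmod z
      \<longleftrightarrow> r * r = r * (2 * Re z * cos \<theta> + 2 * Im z * sin \<theta>)"
    by (simp add: dist_eq_cmod_iff algebra_simps)
  then show ?thesis using assms by simp
qed

lemma inscribable_iff_center:
  assumes "1 \<le> n"
  shows "inscribable n c \<longleftrightarrow> (\<exists>z. z \<noteq> 0 \<and> (\<forall>k\<in>{1..n-1}. dist (vertex n c k) z = cmod z))"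
proof
  assume "inscribable n c"
  then obtain z r where "0 < r" and r: "\<forall>k\<in>{1..n}. dist (vertex n c k) z = r"
    unfolding inscribable_def by blast
  moreover have "r = cmod z" using r assms by (auto simp: vertex_def)
  ultimately show "\<exists>z. z \<noteq> 0 \<and> (\<forall>k\<in>{1..n-1}. dist (vertex n c k) z = cmod z)"
    by (intro exI[of _ z]) auto
next
  assume "\<exists>z. z \<noteq> 0 \<and> (\<forall>k\<in>{1..n-1}. dist (vertex n c k) z = cmod z)"
  then obtain z where "z \<noteq> 0" and z: "\<forall>k\<in>{1..n-1}. dist (vertex n c k) z = cmod z" by blast
  have "dist (vertex n c k) z = cmod z" if "k \<in> {1..n}" for k
    using z[rule_format, of k] that by (cases "k = n") (auto simp: vertex_def)
  then show "inscribable n c" using \<open>z \<noteq> 0\<close> unfolding inscribable_def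
    by (intro exI[of _ z] exI[of _ "cmod z"]) auto
qed

lemma inscribable_iff_sinusoid:
  assumes om: "in_Omega n c" and "2 \<le> n"
  shows "inscribable n c \<longleftrightarrow> (\<exists>a b. \<forall>k\<in>{1..n-1}. tc c k = a * cos (theta c k) + b * sin (theta c k))"
proof -
  have polar: "dist (vertex n c k) z = cmod z \<longleftrightarrow> tc c k = 2 * Re z * cos (theta c k) + 2 * Im z * sin (theta c k)"
    if "k \<in> {1..n-1}" for k z
    using that in_Omega_tc_pos[OF om] by (simp add: vertex_polar dist_polar_eq_cmod_iff)
  show ?thesis
  proof
    assume "inscribable n c"
    then obtain z where "\<forall>k\<in>{1..n-1}. dist (vertex n c k) z = cmod z"
      using inscribable_iff_center \<open>2 \<le> n\<close> by auto
    then show "\<exists>a b. \<forall>k\<in>{1..n-1}. tc c k = a * cos (theta c k) + b * sin (theta c k)"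
      using polar by blast
  next
    assume "\<exists>a b. \<forall>k\<in>{1..n-1}. tc c k = a * cos (theta c k) + b * sin (theta c k)"
    then obtain a b where ab: "\<forall>k\<in>{1..n-1}. tc c k = a * cos (theta c k) + b * sin (theta c k)"
      by blast
    define z where "z = Complex (a / 2) (b / 2)"
    have "tc c 1 = a * cos (theta c 1) + b * sin (theta c 1)" using ab \<open>2 \<le> n\<close> by auto
    moreover have "0 < tc c 1" using in_Omega_tc_pos[OF om, of 1] \<open>2 \<le> n\<close> by simp
    ultimately have "z \<noteq> 0" by (auto simp: z_def theta_def complex_eq_iff)
    moreover have "\<forall>k\<in>{1..n-1}. dist (vertex n c k) z = cmod z" using polar ab by (simp add: z_def)
    ultimately show "inscribable n c" using inscribable_iff_center \<open>2 \<le> n\<close> by auto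
  qed
qed

lemma central_angle_bounds:
  "in_Omega n c \<Longrightarrow> 1 \<le> k \<Longrightarrow> k \<le> n - 2 \<Longrightarrow> 0 < central_angle c k \<and> central_angle c k < pi"
  using alpha_bounds[OF in_Omega_in_V] by (simp add: central_angle_def)

lemma sin_central_angle_gt_0:
  "in_Omega n c \<Longrightarrow> 1 \<le> k \<Longrightarrow> k \<le> n - 2 \<Longrightarrow> 0 < sin (central_angle c k)"
  using sin_alpha_gt_0[OF in_Omega_in_V] by (simp add: central_angle_def)

lemma sine_relation_eq_0_if_sinusoid:
  assumes ab: "\<And>k. k \<in> {1..n-1} \<Longrightarrow> tc c k = a * cos (theta c k) + b * sin (theta c k)"
    and k: "k \<in> {1..n-3}"
  shows "sine_relation c k = 0"
proof -
  have t1: "theta c (Suc k) - theta c k = central_angle c k"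
    and t2: "theta c (Suc (Suc k)) - theta c (Suc k) = central_angle c (Suc k)"
    using k by (simp_all add: theta_Suc)
  have "tc c k = a * cos (theta c k) + b * sin (theta c k)"
    "tc c (Suc k) = a * cos (theta c (Suc k)) + b * sin (theta c (Suc k))"
    "tc c (Suc (Suc k)) = a * cos (theta c (Suc (Suc k))) + b * sin (theta c (Suc (Suc k)))"
    using k by (intro ab; auto)+
  then have "tc c k * sin (theta c (Suc (Suc k)) - theta c (Suc k))
      - tc c (Suc k) * sin (theta c (Suc (Suc k)) - theta c k)
      + tc c (Suc (Suc k)) * sin (theta c (Suc k) - theta c k) = 0"
    using sinusoid_three_point[where a = a and b = b and u = "theta c k" and v = "theta c (Suc k)"
        and w = "theta c (Suc (Suc k))"]
    by simp
  moreover have "theta c (Suc (Suc k)) - theta c k = central_angle c k + central_angle c (Suc k)"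
    using t1 t2 by simp
  ultimately show ?thesis unfolding sine_relation_def t1 t2 by simp
qed

lemma sinusoid_if_sine_relations:
  assumes om: "in_Omega n c" and "3 \<le> n" and R: "\<forall>k\<in>{1..n-3}. sine_relation c k = 0"
  shows "\<exists>a b. \<forall>k\<in>{1..n-1}. tc c k = a * cos (theta c k) + b * sin (theta c k)"
proof -
  define a where "a = tc c 1"
  define b where "b = (tc c 2 - tc c 1 * cos (central_angle c 1)) / sin (central_angle c 1)"
  define f where "f t = a * cos t + b * sin t" for t
  have P: "f (theta c (Suc j)) = tc c (Suc j) \<and> f (theta c (Suc (Suc j))) = tc c (Suc (Suc j))"
    if "Suc (Suc j) \<le> n - 1" for j
    using that
  proof (induction j)
    case 0
    have "sin (central_angle c 1) > 0" using sin_central_angle_gt_0[OF om, of 1] \<open>3 \<le> n\<close> by simp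
    moreover have "theta c (Suc 0) = 0" and "theta c 2 = central_angle c 1"
      using theta_Suc[of 1 c] by (simp_all add: theta_def numeral_2_eq_2)
    ultimately show ?case by (simp add: f_def a_def b_def numeral_2_eq_2)
  next
    case (Suc j)
    define k where "k = Suc j"
    have k: "k \<in> {1..n-3}" using Suc.prems by (auto simp: k_def)
    have IH: "f (theta c k) = tc c k" "f (theta c (Suc k)) = tc c (Suc k)"
      using Suc by (auto simp: k_def)
    have t1: "theta c (Suc k) - theta c k = central_angle c k"
      and t2: "theta c (Suc (Suc k)) - theta c (Suc k) = central_angle c (Suc k)"
      and t3: "theta c (Suc (Suc k)) - theta c k = central_angle c k + central_angle c (Suc k)"
      using k by (simp_all add: theta_Suc)
    have "tc c k * sin (central_angle c (Suc k)) - tc c (Suc k) * sin (central_angle c k + central_angle c (Suc k))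
        + f (theta c (Suc (Suc k))) * sin (central_angle c k) = 0"
      using sinusoid_three_point[where a = a and b = b and u = "theta c k" and v = "theta c (Suc k)"
        and w = "theta c (Suc (Suc k))"]
      unfolding t1 t2 t3 IH[symmetric] f_def .
    moreover have "sine_relation c k = 0" using R k by blast
    ultimately have "f (theta c (Suc (Suc k))) * sin (central_angle c k) = tc c (Suc (Suc k)) * sin (central_angle c k)"
      unfolding sine_relation_def by linarith
    moreover have "sin (central_angle c k) > 0" using sin_central_angle_gt_0[OF om] k by auto
    ultimately show ?case using IH by (simp add: k_def)
  qed
  have "tc c k = f (theta c k)" if k: "k \<in> {1..n-1}" for k
  proof (cases "k \<le> n - 2")
    case True
    then obtain j where "k = Suc j" using k by (cases k) auto
    then show ?thesis using P[of j] True k by auto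
  next
    case False
    then have "k = Suc (Suc (n - 3))" using k \<open>3 \<le> n\<close> by auto
    then show ?thesis using P[of "n - 3"] \<open>3 \<le> n\<close> by auto
  qed
  then show ?thesis unfolding f_def by blast
qed

lemma inscribable_iff_gamma_eq_0:
  assumes om: "in_Omega n c" and "4 \<le> n"
  shows "inscribable n c \<longleftrightarrow> (\<forall>k\<in>{1..n-3}. gamma_k c k = 0)"
proof -
  have "inscribable n c \<longleftrightarrow> (\<exists>a b. \<forall>k\<in>{1..n-1}. tc c k = a * cos (theta c k) + b * sin (theta c k))"
    using inscribable_iff_sinusoid[OF om] \<open>4 \<le> n\<close> by simp
  also have "\<dots> \<longleftrightarrow> (\<forall>k\<in>{1..n-3}. sine_relation c k = 0)"
  proof
    assume "\<exists>a b. \<forall>k\<in>{1..n-1}. tc c k = a * cos (theta c k) + b * sin (theta c k)"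
    then obtain a b where "\<And>k. k \<in> {1..n-1} \<Longrightarrow> tc c k = a * cos (theta c k) + b * sin (theta c k)"
      by blast
    then show "\<forall>k\<in>{1..n-3}. sine_relation c k = 0" using sine_relation_eq_0_if_sinusoid by blast
  qed (use sinusoid_if_sine_relations[OF om] \<open>4 \<le> n\<close> in simp)
  also have "\<dots> \<longleftrightarrow> (\<forall>k\<in>{1..n-3}. gamma_k c k = 0)"
  proof (intro ball_cong refl)
    fix k assume k: "k \<in> {1..n-3}"
    then have "in_V (tc c k) (xc c k) (tc c (Suc k))" "in_V (tc c (Suc k)) (xc c (Suc k)) (tc c (Suc (Suc k)))"
      using in_Omega_in_V[OF om] by auto
    from sine_relation_eq_0_iff_Theta_eq_0[OF this]
    show "sine_relation c k = 0 \<longleftrightarrow> gamma_k c k = 0"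
      by (simp add: sine_relation_def central_angle_def gamma_k_def)
  qed
  finally show ?thesis .
qed

lemma theta_split:
  assumes "1 \<le> j" "j \<le> j'"
  shows "theta c j' = theta c j + (\<Sum>i=j..<j'. central_angle c i)"
proof -
  have "theta c j' = (\<Sum>i=1..<j'. central_angle c i)" by (simp add: theta_def central_angle_def)
  also have "\<dots> = (\<Sum>i=1..<j. central_angle c i) + (\<Sum>i=j..<j'. central_angle c i)"
    using assms by (simp add: sum.atLeastLessThan_concat)
  also have "(\<Sum>i=1..<j. central_angle c i) = theta c j" by (simp add: theta_def central_angle_def)
  finally show ?thesis .
qed

lemma theta_last_lt_2pi:
  assumes "in_Omega n c" "2 \<le> n"
  shows "theta c (n - 1) < 2 * pi"
proof -
  have "{1..<n-1} = {1..n-2}" using assms(2) by auto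
  then show ?thesis using assms(1) unfolding in_Omega_def theta_def by simp
qed

lemma vertex_inj:
  assumes om: "in_Omega n c" and j: "1 \<le> j" "j < j'" "j' \<le> n - 1"
  shows "vertex n c j \<noteq> vertex n c j'"
proof
  assume eq: "vertex n c j = vertex n c j'"
  have pos: "\<And>i. j \<le> i \<Longrightarrow> i < n - 1 \<Longrightarrow> 0 < central_angle c i"
    using central_angle_bounds[OF om] j by auto
  have "0 < (\<Sum>i=j..<j'. central_angle c i)" using pos j by (intro sum_pos) auto
  moreover have "(\<Sum>i=j..<j'. central_angle c i) \<le> (\<Sum>i=j..<n-1. central_angle c i)"
    using pos j by (intro sum_mono2) (auto intro: less_imp_le)
  moreover have "theta c j + (\<Sum>i=j..<n-1. central_angle c i) < 2 * pi"
    using theta_last_lt_2pi[OF om] theta_split[of j "n - 1" c] j by simp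
  moreover have "0 \<le> theta c j"
    unfolding theta_def using central_angle_bounds[OF om] j
    by (intro sum_nonneg) (auto simp: central_angle_def less_imp_le)
  ultimately have d: "0 < theta c j' - theta c j" "theta c j' - theta c j < 2 * pi"
    using theta_split[of j j' c] j by linarith+
  have t: "tc c j > 0" "tc c j' > 0" using in_Omega_tc_pos[OF om] j by auto
  have v: "complex_of_real (tc c j) * cis (theta c j) = complex_of_real (tc c j') * cis (theta c j')"
    using eq j by (simp add: vertex_polar)
  then have "cmod (complex_of_real (tc c j) * cis (theta c j)) = cmod (complex_of_real (tc c j') * cis (theta c j'))"
    by simp
  then have "tc c j = tc c j'" using t by (simp add: norm_mult)
  then have "cis (theta c j) = cis (theta c j')" using v t by simp
  then have "cos (theta c j' - theta c j) = 1"
    by (metis cis.sel cos_diff sin_cos_squared_add3)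
  then obtain m :: nat where "theta c j' - theta c j = m * 2 * pi \<or> theta c j' - theta c j = - (m * 2 * pi)"
    by (auto simp: cos_one_2pi)
  moreover have "0 \<le> real m * 2 * pi" by simp
  moreover have "m = 0 \<or> 2 * pi \<le> real m * 2 * pi" by (cases m) auto
  ultimately show False using d by auto
qed

lemma cmod_diff_polar_square:
  "(cmod (complex_of_real s * cis (u + A) - complex_of_real t * cis u))\<^sup>2 = s\<^sup>2 + t\<^sup>2 - 2 * s * t * cos A"
proof -
  have "(cmod (complex_of_real s * cis (u + A) - complex_of_real t * cis u))\<^sup>2
      = (s * cos (u + A) - t * cos u)\<^sup>2 + (s * sin (u + A) - t * sin u)\<^sup>2"
    by (simp add: cmod_power2)
  also have "\<dots> = s\<^sup>2 * ((cos (u + A))\<^sup>2 + (sin (u + A))\<^sup>2) + t\<^sup>2 * ((cos u)\<^sup>2 + (sin u)\<^sup>2)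
        - 2 * s * t * (cos (u + A) * cos u + sin (u + A) * sin u)"
    by algebra
  also have "cos (u + A) * cos u + sin (u + A) * sin u = cos A"
    using cos_diff[of "u + A" u] by simp
  finally show ?thesis by (simp only: sin_cos_squared_add2 mult_1_right)
qed

lemma consecutive_vertices:
  assumes om: "in_Omega n c" and j: "1 \<le> j" "j \<le> n - 2"
  shows "cmod (vertex n c j) = tc c j" "cmod (vertex n c (Suc j)) = tc c (Suc j)"
    "cmod (vertex n c (Suc j) - vertex n c j) = xc c j"
    "0 < Im (cnj (vertex n c j) * vertex n c (Suc j))"
proof -
  have V: "in_V (tc c j) (xc c j) (tc c (Suc j))" using in_Omega_in_V[OF om j] .
  then have pos: "0 < tc c j" "0 < xc c j" "0 < tc c (Suc j)" by (auto simp: in_V_def)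
  have A: "vertex n c j = complex_of_real (tc c j) * cis (theta c j)"
    and B: "vertex n c (Suc j) = complex_of_real (tc c (Suc j)) * cis (theta c j + central_angle c j)"
    using j by (simp_all add: vertex_polar theta_Suc)
  show "cmod (vertex n c j) = tc c j" "cmod (vertex n c (Suc j)) = tc c (Suc j)"
    using pos unfolding A B by (simp_all add: norm_mult)
  have "(cmod (vertex n c (Suc j) - vertex n c j))\<^sup>2
      = (tc c (Suc j))\<^sup>2 + (tc c j)\<^sup>2 - 2 * tc c (Suc j) * tc c j * cos (central_angle c j)"
    unfolding A B by (rule cmod_diff_polar_square)
  also have "2 * tc c (Suc j) * tc c j * cos (central_angle c j) = (tc c j)\<^sup>2 + (tc c (Suc j))\<^sup>2 - (xc c j)\<^sup>2"
    using cos_alpha[OF V] pos by (simp add: central_angle_def field_simps)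
  finally show "cmod (vertex n c (Suc j) - vertex n c j) = xc c j"
    using pos by (simp add: power2_eq_iff_nonneg)
  have "cnj (cis (theta c j)) * cis (theta c j + central_angle c j) = cis (central_angle c j)"
    by (simp add: cis_cnj cis_mult)
  moreover have "cnj (vertex n c j) * vertex n c (Suc j)
      = complex_of_real (tc c j * tc c (Suc j)) * (cnj (cis (theta c j)) * cis (theta c j + central_angle c j))"
    unfolding A B by (simp add: mult_ac)
  ultimately have "cnj (vertex n c j) * vertex n c (Suc j) = complex_of_real (tc c j * tc c (Suc j)) * cis (central_angle c j)"
    by simp
  then show "0 < Im (cnj (vertex n c j) * vertex n c (Suc j))"
    using pos sin_central_angle_gt_0[OF om j] by simp
qed

text \<open>On a circle through \<open>0\<close> with centre \<open>z\<close>, a right angle at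
  \<open>A\<close> in the triangle \<open>0 A B\<close> forces \<open>B\<close> to be the antipode \<open>2 z\<close> of \<open>0\<close>.\<close>

lemma thales_converse:
  fixes A B z :: complex
  assumes "dist A z = cmod z" "dist B z = cmod z" "Im (cnj A * B) \<noteq> 0"
    and "(cmod B)\<^sup>2 = (cmod A)\<^sup>2 + (cmod (B - A))\<^sup>2"
  shows "B = 2 * z"
proof -
  define w1 where "w1 = Re B - 2 * Re z"
  define w2 where "w2 = Im B - 2 * Im z"
  have cA: "(Re A)\<^sup>2 + (Im A)\<^sup>2 = 2 * (Re A * Re z + Im A * Im z)"
    and cB: "(Re B)\<^sup>2 + (Im B)\<^sup>2 = 2 * (Re B * Re z + Im B * Im z)"
    using assms(1,2) by (simp_all add: dist_eq_cmod_iff)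
  have "(Re B)\<^sup>2 + (Im B)\<^sup>2 = ((Re A)\<^sup>2 + (Im A)\<^sup>2) + ((Re B - Re A)\<^sup>2 + (Im B - Im A)\<^sup>2)"
    using assms(4) by (simp only: cmod_power2 minus_complex.sel)
  then have "Re A * Re B + Im A * Im B = (Re A)\<^sup>2 + (Im A)\<^sup>2"
    by (simp add: power2_eq_square algebra_simps)
  then have e1: "Re A * w1 + Im A * w2 = 0" using cA by (simp add: w1_def w2_def algebra_simps)
  have e2: "Re B * w1 + Im B * w2 = 0" using cB by (simp add: w1_def w2_def power2_eq_square algebra_simps)
  have det: "Re A * Im B - Im A * Re B \<noteq> 0" using assms(3) by (simp add: algebra_simps)
  have "(Re A * Im B - Im A * Re B) * w1 = Im B * (Re A * w1 + Im A * w2) - Im A * (Re B * w1 + Im B * w2)"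
    "(Re A * Im B - Im A * Re B) * w2 = Re A * (Re B * w1 + Im B * w2) - Re B * (Re A * w1 + Im A * w2)"
    by (simp_all add: algebra_simps)
  then have "w1 = 0" and "w2 = 0" using e1 e2 det by (simp_all only: mult_zero_right diff_self mult_eq_0_iff) simp_all
  then show ?thesis by (simp add: w1_def w2_def complex_eq_iff)
qed

lemma vertex_antipode_if_right_angle:
  assumes om: "in_Omega n c" and j: "1 \<le> j" "j \<le> n - 2"
    and z: "\<forall>k\<in>{1..n-1}. dist (vertex n c k) z = cmod z"
  shows "(tc c (Suc j))\<^sup>2 = (tc c j)\<^sup>2 + (xc c j)\<^sup>2 \<Longrightarrow> vertex n c (Suc j) = 2 * z"
    and "(tc c j)\<^sup>2 = (xc c j)\<^sup>2 + (tc c (Suc j))\<^sup>2 \<Longrightarrow> vertex n c j = 2 * z"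
proof -
  note v = consecutive_vertices[OF om j]
  have on_circle: "dist (vertex n c j) z = cmod z" "dist (vertex n c (Suc j)) z = cmod z"
    using z j by auto
  show "vertex n c (Suc j) = 2 * z" if "(tc c (Suc j))\<^sup>2 = (tc c j)\<^sup>2 + (xc c j)\<^sup>2"
    using on_circle v that by (intro thales_converse) auto
  show "vertex n c j = 2 * z" if "(tc c j)\<^sup>2 = (xc c j)\<^sup>2 + (tc c (Suc j))\<^sup>2"
  proof (rule thales_converse[OF on_circle(2,1)])
    show "Im (cnj (vertex n c (Suc j)) * vertex n c j) \<noteq> 0"
      using v(4) by (simp add: algebra_simps)
    show "(cmod (vertex n c j))\<^sup>2 = (cmod (vertex n c (Suc j)))\<^sup>2 + (cmod (vertex n c j - vertex n c (Suc j)))\<^sup>2"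
      using v(1-3) that by (simp add: norm_minus_commute)
  qed
qed

text \<open>An inscribed polygon has at most one vertex antipodal to \<open>M\<^sub>n\<close>.\<close>

lemma right_angles_at_same_antipode:
  assumes om: "in_Omega n c" and "4 \<le> n" and ins: "inscribable n c"
    and k: "k \<in> {1..n-3}" and k': "k' \<in> {1..n-3}"
    and F: "(tc c (Suc (Suc k)))\<^sup>2 = (tc c (Suc k))\<^sup>2 + (xc c (Suc k))\<^sup>2"
    and B: "(tc c k')\<^sup>2 = (xc c k')\<^sup>2 + (tc c (Suc k'))\<^sup>2"
  shows "Suc (Suc k) = k'"
proof -
  obtain z where z: "\<forall>k\<in>{1..n-1}. dist (vertex n c k) z = cmod z"
    using ins inscribable_iff_center \<open>4 \<le> n\<close> by auto
  have "vertex n c (Suc (Suc k)) = vertex n c k'"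
    using vertex_antipode_if_right_angle[OF om _ _ z, of "Suc k"] vertex_antipode_if_right_angle[OF om _ _ z, of k']
      F B k k' by auto
  moreover have "1 \<le> k'" "k' \<le> n - 1" "Suc (Suc k) \<le> n - 1" using k k' by auto
  ultimately show ?thesis
    using vertex_inj[OF om, of "Suc (Suc k)" k'] vertex_inj[OF om, of k' "Suc (Suc k)"]
    by (cases "Suc (Suc k) < k'") (auto simp: not_less_iff_gr_or_eq)
qed

section \<open>Charts of \<open>\<Gamma>\<^sub>n\<close>\<close>

lemma open_Collect_finite_Ball:
  assumes "finite K" "\<And>k. k \<in> K \<Longrightarrow> open {x. P k x}"
  shows "open {x. \<forall>k\<in>K. P k x}"
proof -
  have "{x. \<forall>k\<in>K. P k x} = (\<Inter>k\<in>K. {x. P k x})" by auto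
  then show ?thesis using assms by auto
qed

lemma open_vimage_if_isCont:
  assumes "open S" "\<And>x. f x \<in> S \<Longrightarrow> isCont f x"
  shows "open (f -` S)"
  unfolding open_subopen[of "f -` S"]
proof
  fix x assume "x \<in> f -` S"
  then obtain A where "open A" "x \<in> A" "\<forall>y\<in>A. f y \<in> S"
    using assms unfolding continuous_at_open by blast
  then show "\<exists>T. open T \<and> x \<in> T \<and> T \<subseteq> f -` S" by blast
qed

lemma open_Collect_in_V:
  assumes "continuous_on UNIV f" "continuous_on UNIV g" "continuous_on UNIV h"
  shows "open {x. in_V (f x) (g x) (h x)}"
  unfolding in_V_def using assms
  by (intro open_Collect_conj open_Collect_less continuous_intros)

lemma continuous_on_alpha:
  assumes "continuous_on S f" "continuous_on S g" "continuous_on S h"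
    and "\<And>x. x \<in> S \<Longrightarrow> in_V (f x) (g x) (h x)"
  shows "continuous_on S (\<lambda>x. alpha (f x) (g x) (h x))"
proof -
  have "f x \<noteq> 0" "h x \<noteq> 0" "-1 \<le> ((f x)\<^sup>2 + (h x)\<^sup>2 - (g x)\<^sup>2) / (2 * f x * h x)"
    "((f x)\<^sup>2 + (h x)\<^sup>2 - (g x)\<^sup>2) / (2 * f x * h x) \<le> 1" if "x \<in> S" for x
    using in_V_cos_bounds[OF assms(4)[OF that]] assms(4)[OF that] by (auto simp: in_V_def)
  then show ?thesis
    unfolding alpha_def using assms(1-3) by (intro continuous_intros) auto
qed

lemma dim_coordinate_subspace:
  fixes Q :: "'n::finite set"
  shows "dim {x :: real^'n. \<forall>q\<in>Q. x $ q = 0} = CARD('n) - card Q"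
proof -
  define d where "d = (\<lambda>q. axis q (1::real)) ` (UNIV - Q)"
  have inj: "inj (\<lambda>q::'n. axis q (1::real))" by (auto simp: inj_on_def axis_eq_axis)
  have "{x :: real^'n. \<forall>q\<in>Q. x $ q = 0} = {x. \<forall>i\<in>Basis. i \<notin> d \<longrightarrow> x \<bullet> i = 0}"
    by (force simp: d_def Basis_vec_def cart_eq_inner_axis axis_eq_axis)
  moreover have "d \<subseteq> Basis" by (auto simp: d_def Basis_vec_def)
  ultimately have "dim {x :: real^'n. \<forall>q\<in>Q. x $ q = 0} = card d" by (simp add: dim_substandard)
  also have "card d = card (UNIV - Q)" unfolding d_def by (rule card_image[OF inj_on_subset[OF inj]]) auto
  also have "\<dots> = CARD('n) - card Q" by (rule card_Diff_subset) auto
  finally show ?thesis .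
qed

locale polygon_coords =
  fixes n :: nat and idx :: "nat \<Rightarrow> 'm::finite"
  assumes n_ge_4: "4 \<le> n" and idx_bij: "bij_betw idx {..<2 * n - 3} (UNIV :: 'm set)"
begin

definition T :: "nat \<Rightarrow> real^'m \<Rightarrow> real" where "T k \<omega> = tc (coords idx \<omega>) k"
definition X :: "nat \<Rightarrow> real^'m \<Rightarrow> real" where "X k \<omega> = xc (coords idx \<omega>) k"
definition index_of :: "'m \<Rightarrow> nat" where "index_of q = inv_into {..<2 * n - 3} idx q"

lemma T_eq: "T k \<omega> = \<omega> $ idx (2 * k - 2)"
  by (simp add: T_def tc_def coords_def)

lemma X_eq: "X k \<omega> = \<omega> $ idx (2 * k - 1)"
  by (simp add: X_def xc_def coords_def)

lemma index_of_idx: "i < 2 * n - 3 \<Longrightarrow> index_of (idx i) = i"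
  using idx_bij unfolding index_of_def bij_betw_def by (simp add: inv_into_f_f)

lemma index_of_less: "index_of q < 2 * n - 3"
  using idx_bij unfolding index_of_def bij_betw_def by (metis UNIV_I inv_into_into lessThan_iff)

lemma idx_index_of: "idx (index_of q) = q"
  using idx_bij unfolding index_of_def bij_betw_def by (simp add: f_inv_into_f)

lemma continuous_on_T: "continuous_on S (T k)"
  unfolding T_eq[abs_def] by (intro continuous_intros)

lemma continuous_on_X: "continuous_on S (X k)"
  unfolding X_eq[abs_def] by (intro continuous_intros)

lemma isCont_T: "isCont (T k) \<omega>"
  unfolding T_eq[abs_def] by (intro continuous_intros)

lemma isCont_X: "isCont (X k) \<omega>"
  unfolding X_eq[abs_def] by (intro continuous_intros)

lemma elementary_on_T: "elementary_on U (T k)"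
  unfolding T_eq[abs_def] by (rule elementary_on.coord)

lemma elementary_on_X: "elementary_on U (X k)"
  unfolding X_eq[abs_def] by (rule elementary_on.coord)

lemma gamma_k_eq: "gamma_k (coords idx \<omega>) k = Theta (T k \<omega>) (X k \<omega>) (T (k + 1) \<omega>) (X (k + 1) \<omega>) (T (k + 2) \<omega>)"
  by (simp add: gamma_k_def T_def X_def)

lemma Omega_T_pos: "\<omega> \<in> Omega_set idx n \<Longrightarrow> 1 \<le> k \<Longrightarrow> k \<le> n - 1 \<Longrightarrow> 0 < T k \<omega>"
  using in_Omega_tc_pos by (simp add: Omega_set_def T_def)

lemma Omega_X_pos: "\<omega> \<in> Omega_set idx n \<Longrightarrow> 1 \<le> k \<Longrightarrow> k \<le> n - 2 \<Longrightarrow> 0 < X k \<omega>"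
  using in_Omega_in_V by (simp add: Omega_set_def X_def in_V_def)

lemma open_Omega_set: "open (Omega_set idx n)"
proof -
  define W where "W = {\<omega>::real^'m. (\<forall>i\<in>{..<2 * n - 3}. 0 < \<omega> $ idx i) \<and>
      (\<forall>k\<in>{1..n-2}. in_V (T k \<omega>) (X k \<omega>) (T (Suc k) \<omega>))}"
  have "open W"
    unfolding W_def
    by (intro open_Collect_conj open_Collect_finite_Ball open_Collect_less open_Collect_in_V
        continuous_intros continuous_on_T continuous_on_X) simp_all
  moreover have "continuous_on W (\<lambda>\<omega>. \<Sum>k=1..n-2. alpha (T k \<omega>) (X k \<omega>) (T (Suc k) \<omega>))"
    by (intro continuous_on_sum continuous_on_alpha continuous_on_T continuous_on_X) (auto simp: W_def)
  moreover have "Omega_set idx n = W \<inter> (\<lambda>\<omega>. \<Sum>k=1..n-2. alpha (T k \<omega>) (X k \<omega>) (T (Suc k) \<omega>)) -` {..<2 * pi}"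
    by (auto simp: Omega_set_def in_Omega_def W_def T_def X_def coords_def)
  ultimately show ?thesis by (simp add: continuous_open_preimage)
qed

text \<open>\<open>t\<^sub>k\<^sup>2 = x\<^sub>k\<^sup>2 + t\<^bsub>k+1\<^esub>\<^sup>2\<close> is a right angle at \<open>M\<^bsub>k+1\<^esub>\<close>, i.e. \<open>M\<^sub>k\<close> is antipodal to \<open>M\<^sub>n\<close>
  on the circumcircle. Taking the first such side as pivot (the last side if there is none) makes
  every \<open>side_partial j\<close> nonzero.\<close>

definition right_angle_sides :: "real^'m \<Rightarrow> nat set" where
  "right_angle_sides p = {k\<in>{1..n-3}. (T k p)\<^sup>2 = (X k p)\<^sup>2 + (T (Suc k) p)\<^sup>2}"

definition pivot :: "real^'m \<Rightarrow> nat" where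
  "pivot p = (if right_angle_sides p = {} then n - 2 else Min (right_angle_sides p))"

lemma finite_right_angle_sides: "finite (right_angle_sides p)"
  by (simp add: right_angle_sides_def)

lemma pivot_mem_right_angle_sides: "right_angle_sides p \<noteq> {} \<Longrightarrow> pivot p \<in> right_angle_sides p"
  using finite_right_angle_sides by (simp add: pivot_def)

lemma pivot_le_right_angle_side: "k \<in> right_angle_sides p \<Longrightarrow> pivot p \<le> k"
  using finite_right_angle_sides by (auto simp: pivot_def)

lemma pivot_bounds: "1 \<le> pivot p \<and> pivot p \<le> n - 2"
proof (cases "right_angle_sides p = {}")
  case False
  then have "pivot p \<in> right_angle_sides p" by (rule pivot_mem_right_angle_sides)
  then show ?thesis by (auto simp: right_angle_sides_def)
qed (use n_ge_4 in \<open>simp add: pivot_def\<close>)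

end

text \<open>Fix a pivot side \<open>x\<^sub>m\<close>. For \<open>j \<noteq> m\<close>, the equation \<open>\<gamma>\<^bsub>eq_index j\<^esub> = 0\<close> involves besides
  the diagonals only \<open>x\<^sub>j\<close> and the side \<open>x\<^bsub>toward_pivot j\<^esub>\<close> one step closer to the pivot; it is
  quadratic in \<open>x\<^sub>j\<close> with coefficients \<open>coef_a\<close>, \<open>coef_b\<close>, \<open>coef_c\<close>, and \<open>side_partial j\<close> is its
  derivative in \<open>x\<^sub>j\<close>.\<close>

locale pivot_chart = polygon_coords +
  fixes m :: nat
  assumes pivot_ge_1: "1 \<le> m" and pivot_le: "m \<le> n - 2"
begin

definition solved_sides :: "nat set" where "solved_sides = {1..n-2} - {m}"
definition toward_pivot :: "nat \<Rightarrow> nat" where "toward_pivot j = (if m < j then j - 1 else Suc j)"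
definition pivot_dist :: "nat \<Rightarrow> nat" where "pivot_dist j = (if m \<le> j then j - m else m - j)"
definition eq_index :: "nat \<Rightarrow> nat" where "eq_index j = (if m < j then j - 1 else j)"

definition coef_a :: "nat \<Rightarrow> real \<Rightarrow> real^'a \<Rightarrow> real" where
  "coef_a j v \<omega> = (if m < j then T (j - 1) \<omega> * v else v * T (j + 2) \<omega>)"
definition coef_b :: "nat \<Rightarrow> real \<Rightarrow> real^'a \<Rightarrow> real" where
  "coef_b j v \<omega> = (if m < j then T (j + 1) \<omega> * ((T (j - 1) \<omega>)\<^sup>2 + v\<^sup>2 - (T j \<omega>)\<^sup>2)
               else T j \<omega> * (v\<^sup>2 + (T (j + 2) \<omega>)\<^sup>2 - (T (j + 1) \<omega>)\<^sup>2))"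
definition coef_c :: "nat \<Rightarrow> real \<Rightarrow> real^'a \<Rightarrow> real" where
  "coef_c j v \<omega> = (if m < j then T (j - 1) \<omega> * v * ((T (j + 1) \<omega>)\<^sup>2 - (T j \<omega>)\<^sup>2)
               else v * T (j + 2) \<omega> * ((T j \<omega>)\<^sup>2 - (T (j + 1) \<omega>)\<^sup>2))"

definition side_partial :: "nat \<Rightarrow> real^'a \<Rightarrow> real" where
  "side_partial j \<omega> = 2 * coef_a j (X (toward_pivot j) \<omega>) \<omega> * X j \<omega> + coef_b j (X (toward_pivot j) \<omega>) \<omega>"

lemma solved_sides_bounds: "j \<in> solved_sides \<Longrightarrow> 1 \<le> j \<and> j \<le> n - 2 \<and> j \<noteq> m"
  by (auto simp: solved_sides_def)

lemma toward_pivot_bounds: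
  "j \<in> solved_sides \<Longrightarrow>
    1 \<le> toward_pivot j \<and> toward_pivot j \<le> n - 2 \<and> pivot_dist j = Suc (pivot_dist (toward_pivot j))"
  using pivot_ge_1 pivot_le by (auto simp: solved_sides_def toward_pivot_def pivot_dist_def)

lemma pivot_dist_0_iff: "pivot_dist j = 0 \<longleftrightarrow> j = m"
  by (auto simp: pivot_dist_def)

lemma pivot_dist_Suc_solved:
  "pivot_dist j = Suc d \<Longrightarrow> 1 \<le> j \<Longrightarrow> j \<le> n - 2 \<Longrightarrow> j \<in> solved_sides"
  by (auto simp: solved_sides_def pivot_dist_def)

lemma coefs_cong:
  assumes "j \<in> solved_sides" "\<And>k. 1 \<le> k \<Longrightarrow> k \<le> n - 1 \<Longrightarrow> T k \<omega> = T k \<omega>'"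
  shows "coef_a j v \<omega> = coef_a j v \<omega>'" "coef_b j v \<omega> = coef_b j v \<omega>'" "coef_c j v \<omega> = coef_c j v \<omega>'"
proof -
  have j: "1 \<le> j" "j \<le> n - 2" "j \<noteq> m" using solved_sides_bounds[OF assms(1)] by auto
  have "T (j - 1) \<omega> = T (j - 1) \<omega>'" if "m < j" using that j pivot_ge_1 by (intro assms(2)) auto
  moreover have "T j \<omega> = T j \<omega>'" "T (j + 1) \<omega> = T (j + 1) \<omega>'" using j by (intro assms(2); auto)+
  moreover have "T (j + 2) \<omega> = T (j + 2) \<omega>'" if "\<not> m < j" using that j pivot_le by (intro assms(2)) auto
  ultimately show "coef_a j v \<omega> = coef_a j v \<omega>'" "coef_b j v \<omega> = coef_b j v \<omega>'" "coef_c j v \<omega> = coef_c j v \<omega>'"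
    by (auto simp: coef_a_def coef_b_def coef_c_def)
qed

lemma gamma_k_quadratic:
  assumes "j \<in> solved_sides"
  shows "gamma_k (coords idx \<omega>) (eq_index j)
    = coef_a j (X (toward_pivot j) \<omega>) \<omega> * (X j \<omega>)\<^sup>2 + coef_b j (X (toward_pivot j) \<omega>) \<omega> * X j \<omega>
      + coef_c j (X (toward_pivot j) \<omega>) \<omega>"
proof (cases "m < j")
  case True
  then have "j - 1 + 1 = j" "j - 1 + 2 = j + 1" using pivot_ge_1 by auto
  with True show ?thesis
    unfolding gamma_k_eq eq_index_def toward_pivot_def coef_a_def coef_b_def coef_c_def Theta_def
    by (simp add: algebra_simps power2_eq_square)
next
  case False
  then show ?thesis
    unfolding gamma_k_eq eq_index_def toward_pivot_def coef_a_def coef_b_def coef_c_def Theta_def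
    by (simp add: algebra_simps power2_eq_square)
qed

lemma ball_eq_index_iff: "(\<forall>k\<in>{1..n-3}. P k) \<longleftrightarrow> (\<forall>j\<in>solved_sides. P (eq_index j))"
proof
  assume "\<forall>k\<in>{1..n-3}. P k"
  moreover have "eq_index j \<in> {1..n-3}" if "j \<in> solved_sides" for j
    using that pivot_ge_1 pivot_le by (auto simp: solved_sides_def eq_index_def)
  ultimately show "\<forall>j\<in>solved_sides. P (eq_index j)" by blast
next
  assume P: "\<forall>j\<in>solved_sides. P (eq_index j)"
  show "\<forall>k\<in>{1..n-3}. P k"
  proof
    fix k assume k: "k \<in> {1..n-3}"
    show "P k"
    proof (cases "k < m")
      case True
      then have "k \<in> solved_sides" "eq_index k = k" using k pivot_le by (auto simp: solved_sides_def eq_index_def)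
      then show ?thesis using P by metis
    next
      case False
      then have "Suc k \<in> solved_sides" "eq_index (Suc k) = k"
        using k pivot_le by (auto simp: solved_sides_def eq_index_def)
      then show ?thesis using P by metis
    qed
  qed
qed

lemma elementary_on_coefs:
  assumes "elementary_on U V"
  shows "elementary_on U (\<lambda>\<omega>. coef_a j (V \<omega>) \<omega>)" "elementary_on U (\<lambda>\<omega>. coef_b j (V \<omega>) \<omega>)"
    "elementary_on U (\<lambda>\<omega>. coef_c j (V \<omega>) \<omega>)"
  unfolding coef_a_def coef_b_def coef_c_def
  by (cases "m < j"; simp;
      intro elementary_on.mult elementary_on.add elementary_on_diff elementary_on_power2 elementary_on_T assms)+

lemma isCont_coefs:
  assumes "isCont V \<omega>"
  shows "isCont (\<lambda>\<omega>. coef_a j (V \<omega>) \<omega>) \<omega>" "isCont (\<lambda>\<omega>. coef_b j (V \<omega>) \<omega>) \<omega>"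
    "isCont (\<lambda>\<omega>. coef_c j (V \<omega>) \<omega>) \<omega>"
  unfolding coef_a_def coef_b_def coef_c_def
  by (cases "m < j"; simp; intro isCont_mult isCont_add isCont_diff isCont_power isCont_T assms)+

lemma side_partial_ne_0:
  assumes p: "p \<in> Gamma_set idx n" and m: "m = pivot p" and j: "j \<in> solved_sides"
  shows "side_partial j p \<noteq> 0"
proof
  assume D0: "side_partial j p = 0"
  have pO: "p \<in> Omega_set idx n" using p by (simp add: Gamma_set_def)
  have gam: "\<And>k. k \<in> {1..n-3} \<Longrightarrow> gamma_k (coords idx p) k = 0"
    using p inscribable_iff_gamma_eq_0[OF _ n_ge_4] by (auto simp: Gamma_set_def Omega_set_def)
  have jb: "1 \<le> j" "j \<le> n - 2" "j \<noteq> m" using solved_sides_bounds[OF j] by auto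
  show False
  proof (cases "m < j")
    case True
    define k where "k = j - 1"
    have k: "k \<in> {1..n-3}" "Suc k = j" using True jb pivot_ge_1 by (auto simp: k_def)
    have "Theta (T k p) (X k p) (T j p) (X j p) (T (Suc j) p) = 0"
      using gam[OF k(1)] k(2) by (simp add: gamma_k_eq)
    from Theta_eq_0_partial_u4[OF this]
    have "T k p * X k p * ((X j p)\<^sup>2 + (T j p)\<^sup>2 - (T (Suc j) p)\<^sup>2) = 0"
      using D0 True k by (simp add: side_partial_def coef_a_def coef_b_def toward_pivot_def k_def)
    moreover have "T k p > 0" "X k p > 0" using Omega_T_pos[OF pO] Omega_X_pos[OF pO] k by auto
    ultimately have right: "(T (Suc j) p)\<^sup>2 = (T j p)\<^sup>2 + (X j p)\<^sup>2" by simp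
    have "right_angle_sides p \<noteq> {}" using True jb m by (auto simp: pivot_def)
    then have "m \<in> right_angle_sides p" using m pivot_mem_right_angle_sides by simp
    then have "Suc (Suc k) = m"
      using right_angles_at_same_antipode[OF _ n_ge_4 _ k(1), of "coords idx p" m] p right k(2)
      by (auto simp: Gamma_set_def Omega_set_def right_angle_sides_def T_def X_def)
    then show False using True k by simp
  next
    case False
    then have jm: "j < m" using jb by simp
    then have k: "j \<in> {1..n-3}" using jb pivot_le by auto
    have "Theta (T j p) (X j p) (T (Suc j) p) (X (Suc j) p) (T (Suc (Suc j)) p) = 0"
      using gam[OF k] by (simp add: gamma_k_eq)
    from Theta_eq_0_partial_u2[OF this]
    have "X (Suc j) p * T (Suc (Suc j)) p * ((X j p)\<^sup>2 - (T j p)\<^sup>2 + (T (Suc j) p)\<^sup>2) = 0"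
      using D0 False by (simp add: side_partial_def coef_a_def coef_b_def toward_pivot_def)
    moreover have "X (Suc j) p > 0" "T (Suc (Suc j)) p > 0"
      using Omega_T_pos[OF pO] Omega_X_pos[OF pO] jm jb pivot_le by auto
    ultimately have "j \<in> right_angle_sides p" using k by (simp add: right_angle_sides_def)
    then show False using pivot_le_right_angle_side jm m by fastforce
  qed
qed

end

text \<open>With the root of each quadratic selected by the sign \<open>sg j\<close> of its derivative, the chart
  replaces every \<open>x\<^sub>j\<close>, \<open>j \<noteq> m\<close>, by \<open>x\<^sub>j\<close> minus that root. Its Jacobian is unitriangular, and
  it is inverted by solving for the sides outward from the pivot (\<open>side_rec\<close>).\<close>

locale signed_pivot_chart = pivot_chart +
  fixes sg :: "nat \<Rightarrow> real"
  assumes sg: "\<And>j. sg j = 1 \<or> sg j = -1"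
begin

definition solved_value :: "nat \<Rightarrow> real \<Rightarrow> real^'a \<Rightarrow> real" where
  "solved_value j v \<omega> = quadratic_root (coef_a j v \<omega>) (coef_b j v \<omega>) (coef_c j v \<omega>) (sg j)"

definition chart :: "real^'a \<Rightarrow> real^'a" where
  "chart \<omega> = (\<chi> q. if odd (index_of q) \<and> (index_of q + 1) div 2 \<in> solved_sides
      then \<omega> $ q - solved_value ((index_of q + 1) div 2) (X (toward_pivot ((index_of q + 1) div 2)) \<omega>) \<omega>
      else \<omega> $ q)"

fun side_rec :: "nat \<Rightarrow> nat \<Rightarrow> real^'a \<Rightarrow> real" where
  "side_rec 0 j w = X j w"
| "side_rec (Suc d) j w = (if j \<in> solved_sides then X j w + solved_value j (side_rec d (toward_pivot j) w) w else X j w)"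

definition chart_inv_side :: "nat \<Rightarrow> real^'a \<Rightarrow> real" where
  "chart_inv_side j w = side_rec (pivot_dist j) j w"

definition chart_inv :: "real^'a \<Rightarrow> real^'a" where
  "chart_inv w = (\<chi> q. if odd (index_of q) then chart_inv_side ((index_of q + 1) div 2) w else w $ q)"

lemma chart_inv_side_pivot: "chart_inv_side m w = X m w"
  by (simp add: chart_inv_side_def pivot_dist_def)

lemma chart_inv_side_solved:
  "j \<in> solved_sides \<Longrightarrow> chart_inv_side j w = X j w + solved_value j (chart_inv_side (toward_pivot j) w) w"
  using toward_pivot_bounds[of j] by (simp add: chart_inv_side_def)

lemma odd_index:
  assumes "odd i" "i < 2 * n - 3"
  shows "1 \<le> (i + 1) div 2 \<and> (i + 1) div 2 \<le> n - 2 \<and> i = 2 * ((i + 1) div 2) - 1"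
  using assms n_ge_4 by (auto elim!: oddE)

lemma T_chart: "1 \<le> k \<Longrightarrow> k \<le> n - 1 \<Longrightarrow> T k (chart \<omega>) = T k \<omega>"
  unfolding T_eq chart_def using index_of_idx[of "2 * k - 2"] by auto

lemma X_chart:
  "1 \<le> j \<Longrightarrow> j \<le> n - 2 \<Longrightarrow>
   X j (chart \<omega>) = (if j \<in> solved_sides then X j \<omega> - solved_value j (X (toward_pivot j) \<omega>) \<omega> else X j \<omega>)"
  unfolding chart_def using index_of_idx[of "2 * j - 1"]
  by (auto simp: X_eq[symmetric]) (auto simp: X_eq)

lemma T_chart_inv: "1 \<le> k \<Longrightarrow> k \<le> n - 1 \<Longrightarrow> T k (chart_inv w) = T k w"
  unfolding T_eq chart_inv_def using index_of_idx[of "2 * k - 2"] by auto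

lemma X_chart_inv: "1 \<le> j \<Longrightarrow> j \<le> n - 2 \<Longrightarrow> X j (chart_inv w) = chart_inv_side j w"
  unfolding chart_inv_def X_eq using index_of_idx[of "2 * j - 1"] by auto

lemma solved_value_cong:
  assumes "j \<in> solved_sides" "\<And>k. 1 \<le> k \<Longrightarrow> k \<le> n - 1 \<Longrightarrow> T k \<omega> = T k \<omega>'"
  shows "solved_value j v \<omega> = solved_value j v \<omega>'"
  using coefs_cong[OF assms] by (simp add: solved_value_def)

lemma chart_inv_side_chart: "1 \<le> j \<Longrightarrow> j \<le> n - 2 \<Longrightarrow> chart_inv_side j (chart \<omega>) = X j \<omega>"
proof (induction "pivot_dist j" arbitrary: j)
  case 0
  then have "j = m" using pivot_dist_0_iff by simp
  then show ?case using X_chart[of m] pivot_ge_1 pivot_le by (simp add: chart_inv_side_pivot solved_sides_def)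
next
  case (Suc d)
  have j: "j \<in> solved_sides" using pivot_dist_Suc_solved[OF Suc.hyps(2)[symmetric] Suc.prems] .
  note tb = toward_pivot_bounds[OF j]
  have IH: "chart_inv_side (toward_pivot j) (chart \<omega>) = X (toward_pivot j) \<omega>"
    using Suc.hyps tb by auto
  have "solved_value j (X (toward_pivot j) \<omega>) (chart \<omega>) = solved_value j (X (toward_pivot j) \<omega>) \<omega>"
    using solved_value_cong[OF j, of "chart \<omega>" \<omega>] T_chart by auto
  then show ?case using chart_inv_side_solved[OF j, of "chart \<omega>"] IH X_chart[of j \<omega>] Suc.prems j by simp
qed

lemma chart_inv_chart: "chart_inv (chart \<omega>) = \<omega>"
proof (subst vec_eq_iff, intro allI)
  fix q
  define i where "i = index_of q"
  have i: "i < 2 * n - 3" "idx i = q" using index_of_less idx_index_of by (auto simp: i_def)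
  show "chart_inv (chart \<omega>) $ q = \<omega> $ q"
  proof (cases "odd i")
    case True
    note oi = odd_index[OF True i(1)]
    have "chart_inv (chart \<omega>) $ q = chart_inv_side ((i + 1) div 2) (chart \<omega>)"
      using True by (simp add: chart_inv_def i_def)
    also have "\<dots> = X ((i + 1) div 2) \<omega>" using oi by (intro chart_inv_side_chart) auto
    also have "\<dots> = \<omega> $ q" using oi i by (simp add: X_eq)
    finally show ?thesis .
  next
    case False
    then show ?thesis by (simp add: chart_inv_def chart_def i_def)
  qed
qed

lemma chart_chart_inv: "chart (chart_inv w) = w"
proof (subst vec_eq_iff, intro allI)
  fix q
  define i where "i = index_of q"
  have i: "i < 2 * n - 3" "idx i = q" using index_of_less idx_index_of by (auto simp: i_def)
  show "chart (chart_inv w) $ q = w $ q"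
  proof (cases "odd i")
    case True
    note oi = odd_index[OF True i(1)]
    define j where "j = (i + 1) div 2"
    have wq: "w $ q = X j w" using oi i by (simp add: X_eq j_def)
    show ?thesis
    proof (cases "j \<in> solved_sides")
      case jJ: True
      note tb = toward_pivot_bounds[OF jJ]
      have "chart (chart_inv w) $ q = chart_inv w $ q - solved_value j (X (toward_pivot j) (chart_inv w)) (chart_inv w)"
        using True jJ by (simp add: chart_def i_def j_def)
      also have "chart_inv w $ q = chart_inv_side j w" using True by (simp add: chart_inv_def i_def j_def)
      also have "X (toward_pivot j) (chart_inv w) = chart_inv_side (toward_pivot j) w"
        using tb by (intro X_chart_inv) auto
      also have "solved_value j (chart_inv_side (toward_pivot j) w) (chart_inv w)
          = solved_value j (chart_inv_side (toward_pivot j) w) w"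
        using solved_value_cong[OF jJ, of "chart_inv w" w] T_chart_inv by auto
      finally show ?thesis using chart_inv_side_solved[OF jJ, of w] wq by simp
    next
      case False
      then have "j = m" using oi by (auto simp: j_def solved_sides_def)
      have "chart (chart_inv w) $ q = chart_inv w $ q" using False by (simp add: chart_def i_def j_def)
      also have "\<dots> = chart_inv_side j w" using True by (simp add: chart_inv_def i_def j_def)
      finally show ?thesis using wq \<open>j = m\<close> by (simp add: chart_inv_side_pivot)
    qed
  next
    case False
    then show ?thesis by (simp add: chart_inv_def chart_def i_def)
  qed
qed

definition regular_at :: "nat \<Rightarrow> real^'a \<Rightarrow> bool" where
  "regular_at j \<omega> \<longleftrightarrow> coef_a j (X (toward_pivot j) \<omega>) \<omega> > 0
     \<and> (coef_b j (X (toward_pivot j) \<omega>) \<omega>)\<^sup>2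
         - 4 * coef_a j (X (toward_pivot j) \<omega>) \<omega> * coef_c j (X (toward_pivot j) \<omega>) \<omega> > 0
     \<and> sg j * side_partial j \<omega> > 0"

definition chart_dom :: "(real^'a) set" where
  "chart_dom = Omega_set idx n \<inter> {\<omega>. \<forall>j\<in>solved_sides. regular_at j \<omega>}"

definition chart_img :: "(real^'a) set" where
  "chart_img = chart ` chart_dom"

definition side_subspace :: "(real^'a) set" where
  "side_subspace = {w. \<forall>j\<in>solved_sides. w $ idx (2 * j - 1) = 0}"

lemma Gamma_set_iff_solved:
  assumes "\<omega> \<in> chart_dom"
  shows "\<omega> \<in> Gamma_set idx n \<longleftrightarrow> (\<forall>j\<in>solved_sides. X j \<omega> = solved_value j (X (toward_pivot j) \<omega>) \<omega>)"
proof -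
  have om: "in_Omega n (coords idx \<omega>)" and reg: "\<And>j. j \<in> solved_sides \<Longrightarrow> regular_at j \<omega>"
    using assms by (auto simp: chart_dom_def Omega_set_def)
  have "\<omega> \<in> Gamma_set idx n \<longleftrightarrow> (\<forall>k\<in>{1..n-3}. gamma_k (coords idx \<omega>) k = 0)"
    using assms inscribable_iff_gamma_eq_0[OF om n_ge_4] by (simp add: Gamma_set_def chart_dom_def)
  also have "\<dots> \<longleftrightarrow> (\<forall>j\<in>solved_sides. gamma_k (coords idx \<omega>) (eq_index j) = 0)"
    by (rule ball_eq_index_iff)
  also have "\<dots> \<longleftrightarrow> (\<forall>j\<in>solved_sides. X j \<omega> = solved_value j (X (toward_pivot j) \<omega>) \<omega>)"
  proof (intro ball_cong refl)
    fix j assume "j \<in> solved_sides"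
    with reg[of j] sg[of j]
    show "gamma_k (coords idx \<omega>) (eq_index j) = 0 \<longleftrightarrow> X j \<omega> = solved_value j (X (toward_pivot j) \<omega>) \<omega>"
      unfolding gamma_k_quadratic[OF \<open>j \<in> solved_sides\<close>] solved_value_def
      by (intro quadratic_eq_0_iff_root) (auto simp: regular_at_def side_partial_def)
  qed
  finally show ?thesis .
qed

lemma open_chart_dom: "open chart_dom"
proof -
  have "open {\<omega>. \<forall>j\<in>solved_sides. regular_at j \<omega>}"
  proof (rule open_Collect_finite_Ball)
    fix j
    have "continuous_on UNIV (\<lambda>\<omega>. coef_a j (X (toward_pivot j) \<omega>) \<omega>)"
      "continuous_on UNIV (\<lambda>\<omega>. coef_b j (X (toward_pivot j) \<omega>) \<omega>)"
      "continuous_on UNIV (\<lambda>\<omega>. coef_c j (X (toward_pivot j) \<omega>) \<omega>)"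
      by (simp_all add: continuous_at_imp_continuous_on isCont_coefs isCont_X)
    then show "open {\<omega>. regular_at j \<omega>}"
      unfolding regular_at_def side_partial_def
      by (intro open_Collect_conj open_Collect_less continuous_intros continuous_on_X)
  qed (simp add: solved_sides_def)
  then show ?thesis unfolding chart_dom_def using open_Omega_set by auto
qed

lemma smooth_on_chart: "smooth_on chart_dom chart"
proof (rule smooth_on_elementary_components[OF open_chart_dom])
  fix q
  show "elementary_on chart_dom (\<lambda>\<omega>. chart \<omega> $ q)"
  proof (cases "odd (index_of q) \<and> (index_of q + 1) div 2 \<in> solved_sides")
    case True
    define j where "j = (index_of q + 1) div 2"
    have "chart \<omega> $ q = \<omega> $ q - solved_value j (X (toward_pivot j) \<omega>) \<omega>" for \<omega>
      unfolding chart_def vec_lambda_beta if_P[OF True] j_def ..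
    moreover have "elementary_on chart_dom (\<lambda>\<omega>. \<omega> $ q - solved_value j (X (toward_pivot j) \<omega>) \<omega>)"
      unfolding solved_value_def
      by (rule elementary_on_diff[OF elementary_on.coord elementary_on_quadratic_root[OF
            elementary_on_coefs[OF elementary_on_X]]])
        (use True in \<open>auto simp: j_def chart_dom_def regular_at_def\<close>)
    ultimately show ?thesis by simp
  next
    case False
    then have "chart \<omega> $ q = \<omega> $ q" for \<omega>
      by (simp only: chart_def vec_lambda_beta if_not_P[OF False] if_False)
    then show ?thesis by (simp add: elementary_on.coord)
  qed
qed

lemma chart_img_eq: "chart_img = chart_inv -` chart_dom"
  unfolding chart_img_def using chart_inv_chart chart_chart_inv by (auto, metis image_eqI)

lemma regular_coefs_chart_inv:
  assumes "chart_inv w \<in> chart_dom" "j \<in> solved_sides"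
  shows "coef_a j (chart_inv_side (toward_pivot j) w) w > 0"
    "(coef_b j (chart_inv_side (toward_pivot j) w) w)\<^sup>2
      - 4 * coef_a j (chart_inv_side (toward_pivot j) w) w * coef_c j (chart_inv_side (toward_pivot j) w) w > 0"
proof -
  have "regular_at j (chart_inv w)" using assms by (simp add: chart_dom_def)
  moreover have "X (toward_pivot j) (chart_inv w) = chart_inv_side (toward_pivot j) w"
    using toward_pivot_bounds[OF assms(2)] by (intro X_chart_inv) auto
  moreover note coefs_cong[OF assms(2) T_chart_inv, where v = "chart_inv_side (toward_pivot j) w"]
  ultimately show "coef_a j (chart_inv_side (toward_pivot j) w) w > 0"
    "(coef_b j (chart_inv_side (toward_pivot j) w) w)\<^sup>2
      - 4 * coef_a j (chart_inv_side (toward_pivot j) w) w * coef_c j (chart_inv_side (toward_pivot j) w) w > 0"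
    by (simp_all add: regular_at_def)
qed

lemma isCont_chart_inv_side:
  assumes "chart_inv w \<in> chart_dom"
  shows "1 \<le> j \<Longrightarrow> j \<le> n - 2 \<Longrightarrow> isCont (chart_inv_side j) w"
proof (induction "pivot_dist j" arbitrary: j)
  case 0
  then show ?case by (simp add: pivot_dist_0_iff chart_inv_side_pivot[abs_def] isCont_X)
next
  case (Suc d)
  have j: "j \<in> solved_sides" using pivot_dist_Suc_solved[OF Suc.hyps(2)[symmetric] Suc.prems] .
  have IH: "isCont (chart_inv_side (toward_pivot j)) w" using Suc.hyps toward_pivot_bounds[OF j] by auto
  have "isCont (\<lambda>w. X j w + solved_value j (chart_inv_side (toward_pivot j) w) w) w"
    unfolding solved_value_def using regular_coefs_chart_inv[OF assms j]
    by (intro isCont_add isCont_X isCont_quadratic_root isCont_coefs IH) auto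
  moreover have "chart_inv_side j = (\<lambda>w. X j w + solved_value j (chart_inv_side (toward_pivot j) w) w)"
    using chart_inv_side_solved[OF j] by auto
  ultimately show ?case by simp
qed

lemma open_chart_img: "open chart_img"
  unfolding chart_img_eq
proof (rule open_vimage_if_isCont[OF open_chart_dom])
  fix w assume w: "chart_inv w \<in> chart_dom"
  have "isCont (\<lambda>x. chart_inv x $ q) w" for q
    using isCont_chart_inv_side[OF w] odd_index[OF _ index_of_less, of q]
    by (cases "odd (index_of q)") (auto simp: chart_inv_def)
  then show "isCont chart_inv w"
    unfolding isCont_def by (intro vec_tendstoI)
qed

lemma elementary_on_chart_inv_side:
  "1 \<le> j \<Longrightarrow> j \<le> n - 2 \<Longrightarrow> elementary_on chart_img (chart_inv_side j)"
proof (induction "pivot_dist j" arbitrary: j)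
  case 0
  then show ?case by (simp add: pivot_dist_0_iff chart_inv_side_pivot[abs_def] elementary_on_X)
next
  case (Suc d)
  have j: "j \<in> solved_sides" using pivot_dist_Suc_solved[OF Suc.hyps(2)[symmetric] Suc.prems] .
  have IH: "elementary_on chart_img (chart_inv_side (toward_pivot j))"
    using Suc.hyps toward_pivot_bounds[OF j] by auto
  have "elementary_on chart_img (\<lambda>w. X j w + solved_value j (chart_inv_side (toward_pivot j) w) w)"
    unfolding solved_value_def
    by (rule elementary_on.add[OF elementary_on_X elementary_on_quadratic_root[OF elementary_on_coefs[OF IH]]])
      (use regular_coefs_chart_inv[OF _ j] in \<open>auto simp: chart_img_eq\<close>)
  moreover have "chart_inv_side j = (\<lambda>w. X j w + solved_value j (chart_inv_side (toward_pivot j) w) w)"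
    using chart_inv_side_solved[OF j] by auto
  ultimately show ?case by simp
qed

lemma smooth_on_chart_inv: "smooth_on chart_img chart_inv"
proof (rule smooth_on_elementary_components[OF open_chart_img])
  fix q
  show "elementary_on chart_img (\<lambda>w. chart_inv w $ q)"
  proof (cases "odd (index_of q)")
    case True
    then show ?thesis
      using elementary_on_chart_inv_side odd_index[OF True index_of_less] by (simp add: chart_inv_def)
  qed (simp add: chart_inv_def elementary_on.coord)
qed

lemma diffeo_between_chart: "diffeo_between chart_dom chart_img chart"
  unfolding diffeo_between_def
proof (intro exI[of _ chart_inv] conjI)
  show "chart ` chart_dom = chart_img" by (simp add: chart_img_def)
  show "chart_inv ` chart_img = chart_dom"
    unfolding chart_img_def image_image chart_inv_chart by simp
qed (simp_all add: chart_inv_chart chart_chart_inv smooth_on_chart smooth_on_chart_inv)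

lemma chart_image_Gamma_set: "chart ` (Gamma_set idx n \<inter> chart_dom) = chart_img \<inter> side_subspace"
proof -
  have "chart \<omega> \<in> side_subspace \<longleftrightarrow> \<omega> \<in> Gamma_set idx n" if "\<omega> \<in> chart_dom" for \<omega>
  proof -
    have "chart \<omega> \<in> side_subspace \<longleftrightarrow> (\<forall>j\<in>solved_sides. X j (chart \<omega>) = 0)"
      by (simp add: side_subspace_def X_eq)
    also have "\<dots> \<longleftrightarrow> (\<forall>j\<in>solved_sides. X j \<omega> = solved_value j (X (toward_pivot j) \<omega>) \<omega>)"
      using X_chart solved_sides_bounds by (intro ball_cong) auto
    also have "\<dots> \<longleftrightarrow> \<omega> \<in> Gamma_set idx n" using Gamma_set_iff_solved[OF that] by simp
    finally show ?thesis .
  qed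
  then show ?thesis by (auto simp: chart_img_def)
qed

lemma subspace_side_subspace: "subspace side_subspace"
  unfolding side_subspace_def subspace_def by auto

lemma dim_side_subspace: "dim side_subspace = n"
proof -
  define Q where "Q = idx ` (\<lambda>j. 2 * j - 1) ` solved_sides"
  have "side_subspace = {w. \<forall>q\<in>Q. w $ q = 0}"
    by (auto simp: side_subspace_def Q_def)
  moreover have "card Q = n - 3"
  proof -
    have "(\<lambda>j. 2 * j - 1) ` solved_sides \<subseteq> {..<2 * n - 3}"
      using n_ge_4 by (auto simp: solved_sides_def)
    then have "inj_on idx ((\<lambda>j. 2 * j - 1) ` solved_sides)"
      using idx_bij by (auto simp: bij_betw_def intro: inj_on_subset)
    moreover have "inj_on (\<lambda>j. 2 * j - 1) solved_sides" by (auto simp: inj_on_def solved_sides_def)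
    moreover have "card solved_sides = n - 3"
      using pivot_ge_1 pivot_le by (simp add: solved_sides_def card_Diff_singleton)
    ultimately show ?thesis by (simp add: Q_def card_image)
  qed
  moreover have "CARD('a) = 2 * n - 3" using bij_betw_same_card[OF idx_bij] by simp
  ultimately show ?thesis using n_ge_4 dim_coordinate_subspace[of Q] by simp
qed

lemma mem_chart_dom:
  assumes p: "p \<in> Gamma_set idx n" and sg_p: "\<forall>j\<in>solved_sides. sg j * side_partial j p > 0"
  shows "p \<in> chart_dom"
  unfolding chart_dom_def
proof (intro IntI CollectI ballI)
  show pO: "p \<in> Omega_set idx n" using p by (simp add: Gamma_set_def)
  fix j assume j: "j \<in> solved_sides"
  note jb = solved_sides_bounds[OF j] and tb = toward_pivot_bounds[OF j]
  let ?a = "coef_a j (X (toward_pivot j) p) p"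
  let ?b = "coef_b j (X (toward_pivot j) p) p"
  let ?c = "coef_c j (X (toward_pivot j) p) p"
  have "?a > 0"
    using Omega_T_pos[OF pO, of "j - 1"] Omega_T_pos[OF pO, of "j + 2"] Omega_X_pos[OF pO, of "toward_pivot j"]
      jb tb pivot_ge_1 pivot_le
    by (cases "m < j") (auto simp: coef_a_def)
  moreover have "?a * (X j p)\<^sup>2 + ?b * X j p + ?c = 0"
    using gamma_k_quadratic[OF j, of p] p ball_eq_index_iff[of "\<lambda>k. gamma_k (coords idx p) k = 0"] j
      inscribable_iff_gamma_eq_0[OF _ n_ge_4]
    by (auto simp: Gamma_set_def Omega_set_def)
  then have "?b\<^sup>2 - 4 * ?a * ?c = (side_partial j p)\<^sup>2"
    unfolding side_partial_def by algebra
  moreover have "sg j * side_partial j p > 0" using sg_p j by blast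
  moreover from this have "(side_partial j p)\<^sup>2 > 0" by auto
  ultimately show "regular_at j p" unfolding regular_at_def by simp
qed

end

context polygon_coords
begin

lemma local_chart:
  assumes p: "p \<in> Gamma_set idx n"
  shows "\<exists>U V \<phi> L. open U \<and> p \<in> U \<and> open V \<and> diffeo_between U V \<phi> \<and>
        subspace L \<and> dim L = n \<and> \<phi> ` (Gamma_set idx n \<inter> U) = V \<inter> L"
proof -
  interpret pc: pivot_chart n idx "pivot p"
    using pivot_bounds by unfold_locales auto
  define sg where "sg j = (if pc.side_partial j p > 0 then 1 else -1 :: real)" for j
  interpret sc: signed_pivot_chart n idx "pivot p" sg
    by unfold_locales (auto simp: sg_def)
  have "p \<in> sc.chart_dom"
    using pc.side_partial_ne_0[OF p refl] by (intro sc.mem_chart_dom[OF p]) (force simp: sg_def)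
  then show ?thesis
    by (intro exI[of _ sc.chart_dom] exI[of _ sc.chart_img] exI[of _ sc.chart] exI[of _ sc.side_subspace]
        conjI sc.open_chart_dom sc.open_chart_img sc.diffeo_between_chart sc.subspace_side_subspace
        sc.dim_side_subspace sc.chart_image_Gamma_set)
qed

end

theorem proposition2p3:
  fixes n :: nat and idx :: "nat \<Rightarrow> 'm::finite"
  assumes "n \<ge> 4"
    and "bij_betw idx {..<2 * n - 3} (UNIV :: 'm set)"
  shows "Gamma_set idx n = {\<omega> \<in> Omega_set idx n. \<forall>k\<in>{1..n-3}. gamma_k (coords idx \<omega>) k = 0}
         \<and> smooth_submanifold (Gamma_set idx n) n"
proof
  interpret polygon_coords n idx using assms by unfold_locales
  show "Gamma_set idx n = {\<omega> \<in> Omega_set idx n. \<forall>k\<in>{1..n-3}. gamma_k (coords idx \<omega>) k = 0}"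
    using inscribable_iff_gamma_eq_0[OF _ assms(1)] by (auto simp: Gamma_set_def Omega_set_def)
  show "smooth_submanifold (Gamma_set idx n) n"
    unfolding smooth_submanifold_def using local_chart by blast
qed

end
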